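(* Let $n,d$ be positive integers and let $k$ be a positive integer. Then $v_A(n,d,k)\ge v_M(n,d,k)$, where $v_A$ is the value of Alpern's caching game and $v_M$ is the value of the multiple-treasures-per-door search game.
   Context: Multiple-treasures-per-door search game with parameters $(n,d,k)$: the hider places $d$ treasures behind $n$ doors, several treasures allowed behind the same door. In each round the searcher selects at most $k$ doors; if none of them hides a treasure not yet found, she loses; otherwise the hider reveals one not-yet-found treasure behind one of the selected doors (hider's choice). The searcher wins if she finds all $d$ treasures with a total of $d$ guesses. Players may randomize and the searcher may adapt to previous answers; $v_M(n,d,k)$ is the probability the searcher wins under optimal play by both. Alpern's caching game with parameters $(n,d,k)$: there are $n$ places. The hider digs holes at the places with nonnegative depths $h_1,\dots,h_n$ of total depth $\sum_i h_i\le 1$, and hides the $d$ treasures in these holes, each treasure at some place $i$ and some depth $t\in[0,h_i]$ (several treasures may be in the same hole). Afterwards the searcher digs adaptively: at each place she digs downward from the surface, and she may dig a total depth (summed over all places) of at most $k$; she finds a treasure at place $i$ and depth $t$ at the moment her digging at place $i$ reaches depth $t$, and she observes when she finds a treasure. She wins if she finds all $d$ treasures. Players may randomize; $v_A(n,d,k)$ is the probability the searcher wins under optimal play by both. *)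

theory Defs
  imports "HOL-Probability.Probability_Mass_Function"
begin

text \<open>A hider pure strategy is a pair (c, rho): c x is the number
 of treasures behind door x, and rho hist S is the door (in S) whose treasure is revealed
 after the searcher selects S, given the list hist of doors revealed so far.
 A searcher pure strategy maps the list of revealed doors to the selected set of doors.\<close>

definition cnt :: "nat \<Rightarrow> nat list \<Rightarrow> nat" where
  "cnt x h = length (filter (\<lambda>y. y = x) h)"

fun m_win :: "(nat \<Rightarrow> nat) \<Rightarrow> (nat list \<Rightarrow> nat set \<Rightarrow> nat) \<Rightarrow> (nat list \<Rightarrow> nat set)
               \<Rightarrow> nat list \<Rightarrow> nat \<Rightarrow> bool" where
  "m_win c rho sg h 0 = True"
| "m_win c rho sg h (Suc r) =
     ((\<exists>x\<in>sg h. cnt x h < c x) \<and> m_win c rho sg (h @ [rho h (sg h)]) r)"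

definition M_searcher :: "nat \<Rightarrow> nat \<Rightarrow> (nat list \<Rightarrow> nat set) set" where
  "M_searcher n k = {sg. \<forall>h. sg h \<subseteq> {..<n} \<and> card (sg h) \<le> k}"

definition M_hider :: "nat \<Rightarrow> nat \<Rightarrow> ((nat \<Rightarrow> nat) \<times> (nat list \<Rightarrow> nat set \<Rightarrow> nat)) set" where
  "M_hider n d = {(c, rho). (\<forall>x. n \<le> x \<longrightarrow> c x = 0) \<and> (\<Sum>x<n. c x) = d \<and>
      (\<forall>h S. (\<exists>x\<in>S. cnt x h < c x) \<longrightarrow> rho h S \<in> S \<and> cnt (rho h S) h < c (rho h S))}"

definition v_M :: "nat \<Rightarrow> nat \<Rightarrow> nat \<Rightarrow> real" where
  "v_M n d k = (SUP p \<in> {p. set_pmf p \<subseteq> M_searcher n k}.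
      INF H \<in> M_hider n d. measure_pmf.prob p {sg. m_win (fst H) (snd H) sg [] d})"

text \<open>History: list of events (additional digging effort since the previous event,
 number of treasures found at each place at that event). A plan P u i is the extra depth
 dug at place i after extra total effort u since the last event.\<close>

type_synonym a_hist = "(real \<times> (nat \<Rightarrow> nat)) list"
type_synonym a_strat = "a_hist \<Rightarrow> real \<Rightarrow> nat \<Rightarrow> real"

definition A_searcher :: "nat \<Rightarrow> a_strat set" where
  "A_searcher n = {sg. \<forall>hs.
      (\<forall>i. sg hs 0 i = 0) \<and>
      (\<forall>u i. n \<le> i \<longrightarrow> sg hs u i = 0) \<and>
      (\<forall>u u' i. 0 \<le> u \<longrightarrow> u \<le> u' \<longrightarrow> sg hs u i \<le> sg hs u' i) \<and>
      (\<forall>u. 0 \<le> u \<longrightarrow> (\<Sum>i<n. sg hs u i) = u)}"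

text \<open>Hider pure strategy: (hole depths, place of treasure j, depth of treasure j).\<close>
definition A_hider :: "nat \<Rightarrow> nat \<Rightarrow> ((nat \<Rightarrow> real) \<times> (nat \<Rightarrow> nat) \<times> (nat \<Rightarrow> real)) set" where
  "A_hider n d = {(hl, pl, dp). (\<forall>i. 0 \<le> hl i) \<and> (\<Sum>i<n. hl i) \<le> 1 \<and>
      (\<forall>j<d. pl j < n \<and> 0 \<le> dp j \<and> dp j \<le> hl (pl j))}"

text \<open>a_win d sg pl dp b cur F hs r: remaining budget b, current dug depths cur,
 set F of found treasures, history hs, at most r further find events.\<close>
fun a_win :: "nat \<Rightarrow> a_strat \<Rightarrow> (nat \<Rightarrow> nat) \<Rightarrow> (nat \<Rightarrow> real) \<Rightarrow> real \<Rightarrow> (nat \<Rightarrow> real)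
               \<Rightarrow> nat set \<Rightarrow> a_hist \<Rightarrow> nat \<Rightarrow> bool" where
  "a_win d sg pl dp b cur F hs 0 = ({..<d} \<subseteq> F)"
| "a_win d sg pl dp b cur F hs (Suc r) =
     ({..<d} \<subseteq> F \<or>
      (let P = sg hs;
           R = (\<lambda>j. {u. 0 \<le> u \<and> u \<le> b \<and> dp j \<le> cur (pl j) + P u (pl j)});
           U = {j. j < d \<and> j \<notin> F \<and> R j \<noteq> {}};
           t = (\<lambda>j. Inf (R j));
           u = Min (t ` U);
           N = {j \<in> U. t j = u}
       in U \<noteq> {} \<and>
          a_win d sg pl dp (b - u) (\<lambda>i. cur i + P u i) (F \<union> N)
                (hs @ [(u, \<lambda>i. card {j \<in> N. pl j = i})]) r))"

definition v_A :: "nat \<Rightarrow> nat \<Rightarrow> nat \<Rightarrow> real" where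
  "v_A n d k = (SUP p \<in> {p. set_pmf p \<subseteq> A_searcher n}.
      INF H \<in> A_hider n d. measure_pmf.prob p
         {sg. a_win d sg (fst (snd H)) (snd (snd H)) (real k) (\<lambda>_. 0) {} [] d})"

end

theory Submission imports Defs begin

text \<open>A door-game searcher is simulated in the caching game. While the door-game searcher selects a
  set \<open>S\<close> of at most \<open>k\<close> doors, the caching searcher digs the places of \<open>S\<close> at equal speed, each
  measured from the deepest treasure already revealed there. Against a caching hider this wins
  whenever the door-game strategy wins against the door-game hider that always reveals the selected
  door whose next treasure is closest (\<open>min_gap_door\<close>). The budget \<open>k\<close> suffices by a potential
  argument: the total depth of the deepest treasures below the revealed ones is at most \<open>1\<close>
  initially, and a round ending with a reveal at gap \<open>g\<close> costs at most \<open>|S| g \<le> k g\<close> while the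
  potential drops by \<open>g\<close>. Pushing mixed strategies forward along this simulation compares the
  values.\<close>

section \<open>Order statistics\<close>

text \<open>\<open>kth_value N m\<close> is the \<open>m\<close>-th smallest element of a finite multiset of reals given by its
  counting function \<open>N v = #{elements \<le> v}\<close>; for \<open>m = 0\<close> it is \<open>0\<close>.\<close>
definition kth_value :: "(real \<Rightarrow> nat) \<Rightarrow> nat \<Rightarrow> real" where
  "kth_value N m = (if m = 0 then 0 else Inf {v. m \<le> N v})"
definition kth_gap :: "(real \<Rightarrow> nat) \<Rightarrow> nat \<Rightarrow> real" where
  "kth_gap N m = kth_value N (Suc m) - kth_value N m"

lemma count_le_threshold:
  fixes J :: "'a set" and w :: "'a \<Rightarrow> real"
  assumes fin: "finite J" and m1: "1 \<le> m" and mJ: "m \<le> card J"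
  obtains w0 where "w0 \<in> w ` J" and "\<And>v. m \<le> card {j\<in>J. w j \<le> v} \<longleftrightarrow> w0 \<le> v"
proof -
  let ?N = "\<lambda>v. card {j\<in>J. w j \<le> v}"
  let ?W = "{v \<in> w ` J. m \<le> ?N v}"
  have "{j\<in>J. w j \<le> Max (w ` J)} = J" using fin by auto
  then have "Max (w ` J) \<in> ?W" using m1 mJ fin by (auto intro: Max_in)
  then have Wne: "?W \<noteq> {}" by blast
  have Wfin: "finite ?W" using fin by simp
  define w0 where "w0 = Min ?W"
  have w0W: "w0 \<in> ?W" unfolding w0_def using Wne Wfin by (rule Min_in[rotated])
  have "w0 \<le> v" if a: "m \<le> ?N v" for v
  proof -
    have ne: "{j\<in>J. w j \<le> v} \<noteq> {}" using a m1 by (metis card.empty not_one_le_zero le_trans)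
    define w1 where "w1 = Max (w ` {j\<in>J. w j \<le> v})"
    have w1in: "w1 \<in> w ` {j\<in>J. w j \<le> v}" unfolding w1_def using ne fin by (intro Max_in) auto
    then have "w1 \<le> v" by auto
    have "{j\<in>J. w j \<le> w1} = {j\<in>J. w j \<le> v}"
      using \<open>w1 \<le> v\<close> fin unfolding w1_def by (auto intro: Max_ge)
    then have "w1 \<in> ?W" using a w1in by auto
    then show "w0 \<le> v" unfolding w0_def using Wfin \<open>w1 \<le> v\<close> by (meson Min_le order_trans)
  qed
  moreover have "m \<le> ?N v" if "w0 \<le> v" for v
  proof -
    have "?N w0 \<le> ?N v" by (rule card_mono) (use fin that in auto)
    then show ?thesis using w0W by auto
  qed
  ultimately show ?thesis using that w0W by blast
qed

lemma kth_value_char: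
  fixes J :: "'a set" and w :: "'a \<Rightarrow> real"
  assumes "finite J" and "1 \<le> m" and "m \<le> card J"
  shows "kth_value (\<lambda>v. card {j\<in>J. w j \<le> v}) m \<in> w ` J \<and>
    (\<forall>v. m \<le> card {j\<in>J. w j \<le> v} \<longleftrightarrow> kth_value (\<lambda>v. card {j\<in>J. w j \<le> v}) m \<le> v)"
proof -
  obtain w0 where w0: "w0 \<in> w ` J" and iff: "\<And>v. m \<le> card {j\<in>J. w j \<le> v} \<longleftrightarrow> w0 \<le> v"
    using count_le_threshold[OF assms, of w] by blast
  have "{v. m \<le> card {j\<in>J. w j \<le> v}} = {w0..}" using iff by auto
  then have "kth_value (\<lambda>v. card {j\<in>J. w j \<le> v}) m = w0" unfolding kth_value_def using assms(2) by simp
  then show ?thesis using w0 iff by simp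
qed

lemma kth_value_le_iff:
  fixes J :: "'a set" and w :: "'a \<Rightarrow> real"
  assumes "finite J" "1 \<le> m" "m \<le> card J"
  shows "m \<le> card {j\<in>J. w j \<le> v} \<longleftrightarrow> kth_value (\<lambda>v. card {j\<in>J. w j \<le> v}) m \<le> v"
  using kth_value_char[OF assms, of w] by blast

lemma kth_value_attained:
  fixes J :: "'a set" and w :: "'a \<Rightarrow> real"
  assumes "finite J" "1 \<le> m" "m \<le> card J"
  shows "\<exists>j\<in>J. w j = kth_value (\<lambda>v. card {j\<in>J. w j \<le> v}) m"
  using kth_value_char[OF assms, of w] by force

lemma kth_value_nonneg:
  fixes J :: "'a set" and w :: "'a \<Rightarrow> real"
  assumes "finite J" "m \<le> card J" "\<forall>j\<in>J. 0 \<le> w j"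
  shows "0 \<le> kth_value (\<lambda>v. card {j\<in>J. w j \<le> v}) m"
proof (cases "m = 0")
  case True then show ?thesis by (simp add: kth_value_def)
next
  case False
  then show ?thesis using kth_value_attained[OF assms(1) _ assms(2), of w] assms(3) by force
qed

lemma kth_value_mono:
  fixes J :: "'a set" and w :: "'a \<Rightarrow> real"
  assumes "finite J" "m \<le> m'" "m' \<le> card J" "\<forall>j\<in>J. 0 \<le> w j"
  shows "kth_value (\<lambda>v. card {j\<in>J. w j \<le> v}) m \<le> kth_value (\<lambda>v. card {j\<in>J. w j \<le> v}) m'"
proof (cases "m = 0")
  case True then show ?thesis using kth_value_nonneg[OF assms(1,3,4)] by (simp add: kth_value_def)
next
  case False
  let ?t = "kth_value (\<lambda>v. card {j\<in>J. w j \<le> v}) m'"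
  have "m' \<le> card {j\<in>J. w j \<le> ?t}" using kth_value_le_iff[OF assms(1) _ assms(3), of w ?t] False assms(2) by simp
  then have "m \<le> card {j\<in>J. w j \<le> ?t}" using assms(2) by simp
  then show ?thesis using kth_value_le_iff[OF assms(1) _ , of m w ?t] False assms by simp
qed

lemma kth_value_cong:
  assumes "\<And>v. m \<le> N1 v \<longleftrightarrow> m \<le> N2 v"
  shows "kth_value N1 m = kth_value N2 m"
  unfolding kth_value_def using assms by simp


section \<open>The induced door-game hider\<close>

definition treasure_count :: "(nat \<Rightarrow> nat) \<Rightarrow> nat \<Rightarrow> nat \<Rightarrow> nat" where
  "treasure_count pl d x = card {j. j < d \<and> pl j = x}"
definition depth_gap :: "(nat \<Rightarrow> nat) \<Rightarrow> (nat \<Rightarrow> real) \<Rightarrow> nat \<Rightarrow> nat list \<Rightarrow> nat \<Rightarrow> real" where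
  "depth_gap pl dp d h x = kth_gap (\<lambda>v. card {j\<in>{j. j < d \<and> pl j = x}. dp j \<le> v}) (cnt x h)"
definition open_doors :: "(nat \<Rightarrow> nat) \<Rightarrow> nat \<Rightarrow> nat list \<Rightarrow> nat set \<Rightarrow> nat set" where
  "open_doors pl d h S = {x \<in> S. cnt x h < treasure_count pl d x}"

text \<open>The door-game hider induced by a caching-game hider: it reveals the selected door whose next
  treasure lies closest below the last revealed one, i.e. the door a searcher digging all selected
  places to a common level above their revealed treasures reaches first (smallest door on ties).\<close>
definition min_gap_door :: "(nat \<Rightarrow> nat) \<Rightarrow> (nat \<Rightarrow> real) \<Rightarrow> nat \<Rightarrow> nat list \<Rightarrow> nat set \<Rightarrow> nat" where
  "min_gap_door pl dp d h S = (if open_doors pl d h S = {} then 0 else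
     Min {x \<in> open_doors pl d h S. depth_gap pl dp d h x = Min (depth_gap pl dp d h ` open_doors pl d h S)})"

lemma finite_open_doors: "finite (open_doors pl d h S)"
proof -
  have "open_doors pl d h S \<subseteq> pl ` {..<d}"
  proof
    fix x assume "x \<in> open_doors pl d h S"
    then have "{j. j < d \<and> pl j = x} \<noteq> {}"
      unfolding open_doors_def treasure_count_def by (metis (no_types, lifting) card.empty mem_Collect_eq not_less0)
    then show "x \<in> pl ` {..<d}" by auto
  qed
  then show ?thesis by (meson finite_imageI finite_lessThan finite_subset)
qed

lemma min_gap_door_in:
  assumes "open_doors pl d h S \<noteq> {}"
  shows "min_gap_door pl dp d h S \<in>
    {x \<in> open_doors pl d h S. depth_gap pl dp d h x = Min (depth_gap pl dp d h ` open_doors pl d h S)}"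
    (is "_ \<in> ?B")
proof -
  have "Min (depth_gap pl dp d h ` open_doors pl d h S) \<in> depth_gap pl dp d h ` open_doors pl d h S"
    using assms finite_open_doors by (intro Min_in) auto
  then have "?B \<noteq> {}" by auto
  moreover have "finite ?B" using finite_open_doors by simp
  ultimately have "Min ?B \<in> ?B" by (rule Min_in[rotated])
  then show ?thesis unfolding min_gap_door_def using assms by simp
qed

lemma sum_treasure_count:
  assumes "\<And>j. j < d \<Longrightarrow> pl j < n"
  shows "(\<Sum>x<n. treasure_count pl d x) = d"
proof -
  have "(\<Sum>x<n. treasure_count pl d x) = card (\<Union>x<n. {j. j < d \<and> pl j = x})"
    unfolding treasure_count_def by (rule card_UN_disjoint[symmetric]) auto
  also have "(\<Union>x<n. {j. j < d \<and> pl j = x}) = {..<d}" using assms by auto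
  finally show ?thesis by simp
qed

lemma min_gap_hider_in_M_hider:
  assumes "(hl, pl, dp) \<in> A_hider n d"
  shows "(treasure_count pl d, min_gap_door pl dp d) \<in> M_hider n d"
proof -
  have pln: "\<And>j. j < d \<Longrightarrow> pl j < n" using assms by (auto simp: A_hider_def)
  have "treasure_count pl d x = 0" if "n \<le> x" for x
    using pln that unfolding treasure_count_def by (metis (mono_tags, lifting) Collect_empty_eq card.empty leD)
  moreover have "min_gap_door pl dp d h S \<in> S \<and> cnt (min_gap_door pl dp d h S) h < treasure_count pl d (min_gap_door pl dp d h S)"
    if "\<exists>x\<in>S. cnt x h < treasure_count pl d x" for h S
  proof -
    have "open_doors pl d h S \<noteq> {}" using that by (auto simp: open_doors_def)
    from min_gap_door_in[OF this, of dp] show ?thesis by (auto simp: open_doors_def)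
  qed
  ultimately show ?thesis using sum_treasure_count[OF pln] unfolding M_hider_def by auto
qed

lemma cnt_snoc: "cnt y (h @ [x]) = cnt y h + (if x = y then 1 else 0)"
  by (simp add: cnt_def)

lemma cnt_Nil: "cnt y [] = 0"
  by (simp add: cnt_def)

lemma length_eq_sum_cnt: "set h \<subseteq> {..<n} \<Longrightarrow> length h = (\<Sum>x<n. cnt x h)"
proof (induction h rule: rev_induct)
  case Nil then show ?case by (simp add: cnt_Nil)
next
  case (snoc a h)
  then have "(\<Sum>x<n. (if a = x then 1 else 0)) = (1::nat)" by (simp add: sum.delta)
  then show ?case using snoc by (simp add: cnt_snoc sum.distrib)
qed

section \<open>The simulating caching strategy\<close>

type_synonym m_strat = "nat list \<Rightarrow> nat set"

text \<open>The caching-game searcher simulates a door-game searcher. Its state records the simulated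
  door-game history (\<open>revealed\<close>), the current depth dug at each place (\<open>dug\<close>), the number
  \<open>found_upto \<sigma> x v\<close> of treasures found at place \<open>x\<close> at depth at most \<open>v\<close>, and the effort spent
  since the current door-game round began (\<open>effort\<close>). In a round with selected set \<open>S\<close> the
  places of \<open>S\<close> are dug down to the common \<open>level\<close> \<open>effort / |S|\<close> below their last revealed
  treasure; a selected door becomes \<open>ready\<close> for the next simulated reveal once its next treasure
  has been found and the level has reached it.\<close>
datatype sim_state = State (revealed: "nat list") (dug: "nat \<Rightarrow> real") (found_upto: "nat \<Rightarrow> real \<Rightarrow> nat") (effort: real)

definition level :: "m_strat \<Rightarrow> sim_state \<Rightarrow> real" where
  "level sg \<sigma> = effort \<sigma> / card (sg (revealed \<sigma>))"
definition revealed_depth :: "sim_state \<Rightarrow> nat \<Rightarrow> real" where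
  "revealed_depth \<sigma> x = kth_value (found_upto \<sigma> x) (cnt x (revealed \<sigma>))"
definition known_gap :: "sim_state \<Rightarrow> nat \<Rightarrow> real" where
  "known_gap \<sigma> x = kth_gap (found_upto \<sigma> x) (cnt x (revealed \<sigma>))"
definition pending :: "m_strat \<Rightarrow> sim_state \<Rightarrow> nat set" where
  "pending sg \<sigma> = {x \<in> sg (revealed \<sigma>). cnt x (revealed \<sigma>) < found_upto \<sigma> x (dug \<sigma> x)}"
definition ready :: "m_strat \<Rightarrow> sim_state \<Rightarrow> nat set" where
  "ready sg \<sigma> = {x \<in> pending sg \<sigma>. known_gap \<sigma> x \<le> level sg \<sigma>}"

fun reveal_ready :: "m_strat \<Rightarrow> nat \<Rightarrow> sim_state \<Rightarrow> sim_state" where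
  "reveal_ready sg 0 \<sigma> = \<sigma>"
| "reveal_ready sg (Suc f) \<sigma> = (if ready sg \<sigma> = {} then \<sigma>
      else reveal_ready sg f (State (revealed \<sigma> @ [Min (ready sg \<sigma>)]) (dug \<sigma>) (found_upto \<sigma>) 0))"

definition level_dig :: "m_strat \<Rightarrow> sim_state \<Rightarrow> real \<Rightarrow> nat \<Rightarrow> real" where
  "level_dig sg \<sigma> u i = max 0 (revealed_depth \<sigma> i + (effort \<sigma> + u) / card (sg (revealed \<sigma>)) - dug \<sigma> i)
                 - max 0 (revealed_depth \<sigma> i + effort \<sigma> / card (sg (revealed \<sigma>)) - dug \<sigma> i)"

text \<open>Places already dug below the level need no digging; since a caching-game plan must spend
  exactly the effort \<open>u\<close>, the unused effort is dug at place \<open>0\<close>.\<close>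
definition round_plan :: "m_strat \<Rightarrow> sim_state \<Rightarrow> real \<Rightarrow> nat \<Rightarrow> real" where
  "round_plan sg \<sigma> u i = (if i \<in> sg (revealed \<sigma>) then level_dig sg \<sigma> u i else 0)
     + (if i = 0 then u - (\<Sum>y\<in>sg (revealed \<sigma>). level_dig sg \<sigma> u y) else 0)"
definition advance :: "m_strat \<Rightarrow> sim_state \<Rightarrow> real \<Rightarrow> sim_state" where
  "advance sg \<sigma> u = State (revealed \<sigma>) (\<lambda>x. dug \<sigma> x + round_plan sg \<sigma> u x) (found_upto \<sigma>) (effort \<sigma> + u)"
definition ready_effort :: "m_strat \<Rightarrow> sim_state \<Rightarrow> real" where
  "ready_effort sg \<sigma> = max 0 (card (sg (revealed \<sigma>)) * Min (known_gap \<sigma> ` pending sg \<sigma>) - effort \<sigma>)"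

text \<open>Between two finds several simulated rounds may end, each by a reveal of an already found
  treasure; \<open>f\<close> bounds their number.\<close>
fun plan :: "m_strat \<Rightarrow> nat \<Rightarrow> nat \<Rightarrow> sim_state \<Rightarrow> real \<Rightarrow> nat \<Rightarrow> real" where
  "plan sg d 0 \<sigma> u i = round_plan sg \<sigma> u i"
| "plan sg d (Suc f) \<sigma> u i = (if pending sg \<sigma> = {} \<or> u \<le> ready_effort sg \<sigma> then round_plan sg \<sigma> u i
     else round_plan sg \<sigma> (ready_effort sg \<sigma>) i + plan sg d f (reveal_ready sg d (advance sg \<sigma> (ready_effort sg \<sigma>))) (u - ready_effort sg \<sigma>) i)"

definition record_find :: "m_strat \<Rightarrow> sim_state \<Rightarrow> real \<Rightarrow> (nat \<Rightarrow> nat) \<Rightarrow> sim_state" where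
  "record_find sg \<sigma> u cs = State (revealed \<sigma>) (\<lambda>x. dug \<sigma> x + round_plan sg \<sigma> u x)
     (\<lambda>x v. found_upto \<sigma> x v + (if dug \<sigma> x + round_plan sg \<sigma> u x \<le> v then cs x else 0)) (effort \<sigma> + u)"

text \<open>\<open>update\<close> follows \<open>plan\<close> up to an observed find \<open>(u, cs)\<close> and records it.\<close>
fun update :: "m_strat \<Rightarrow> nat \<Rightarrow> nat \<Rightarrow> sim_state \<Rightarrow> real \<times> (nat \<Rightarrow> nat) \<Rightarrow> sim_state" where
  "update sg d 0 \<sigma> (u, cs) = reveal_ready sg d (record_find sg \<sigma> u cs)"
| "update sg d (Suc f) \<sigma> (u, cs) = (if pending sg \<sigma> = {} \<or> u \<le> ready_effort sg \<sigma> then reveal_ready sg d (record_find sg \<sigma> u cs)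
     else update sg d f (reveal_ready sg d (advance sg \<sigma> (ready_effort sg \<sigma>))) (u - ready_effort sg \<sigma>, cs))"

definition init_state :: sim_state where
  "init_state = State [] (\<lambda>_. 0) (\<lambda>_ _. 0) 0"
definition state_of :: "m_strat \<Rightarrow> nat \<Rightarrow> a_hist \<Rightarrow> sim_state" where
  "state_of sg d hs = foldl (\<lambda>\<sigma> ev. update sg d d \<sigma> ev) init_state hs"
definition caching_strategy :: "m_strat \<Rightarrow> nat \<Rightarrow> a_strat" where
  "caching_strategy sg d hs = plan sg d d (state_of sg d hs)"

lemma state_of_snoc: "state_of sg d (hs @ [ev]) = update sg d d (state_of sg d hs) ev"
  by (simp add: state_of_def)

definition valid_plan :: "nat \<Rightarrow> (real \<Rightarrow> nat \<Rightarrow> real) \<Rightarrow> bool" where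
  "valid_plan n P \<longleftrightarrow> (\<forall>i. P 0 i = 0) \<and> (\<forall>u i. n \<le> i \<longrightarrow> P u i = 0) \<and>
     (\<forall>u u' i. 0 \<le> u \<longrightarrow> u \<le> u' \<longrightarrow> P u i \<le> P u' i) \<and> (\<forall>u. 0 \<le> u \<longrightarrow> (\<Sum>i<n. P u i) = u)"

lemma A_searcher_iff_valid_plan: "sg \<in> A_searcher n \<longleftrightarrow> (\<forall>hs. valid_plan n (sg hs))"
  unfolding A_searcher_def valid_plan_def by blast

definition lip_plan :: "(real \<Rightarrow> nat \<Rightarrow> real) \<Rightarrow> bool" where
  "lip_plan P \<longleftrightarrow> (\<forall>i. P 0 i = 0) \<and> (\<forall>u u' i. 0 \<le> u \<longrightarrow> u \<le> u' \<longrightarrow> P u i \<le> P u' i \<and> P u' i - P u i \<le> u' - u)"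

lemma lip_plan_mono: "lip_plan P \<Longrightarrow> 0 \<le> u \<Longrightarrow> u \<le> u' \<Longrightarrow> P u i \<le> P u' i"
  by (simp add: lip_plan_def)
lemma lip_plan_lipschitz: "lip_plan P \<Longrightarrow> 0 \<le> u \<Longrightarrow> u \<le> u' \<Longrightarrow> P u' i - P u i \<le> u' - u"
  by (simp add: lip_plan_def)
lemma lip_plan_0: "lip_plan P \<Longrightarrow> P 0 i = 0"
  by (simp add: lip_plan_def)
lemma lip_plan_nonneg: "lip_plan P \<Longrightarrow> 0 \<le> u \<Longrightarrow> 0 \<le> P u i"
  using lip_plan_mono[of P 0 u i] lip_plan_0[of P i] by simp

lemma valid_plan_lip_plan:
  assumes P: "valid_plan n P"
  shows "lip_plan P"
proof -
  have "P u' i - P u i \<le> u' - u" if "0 \<le> u" "u \<le> u'" for u u' i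
  proof (cases "i < n")
    case True
    have "(\<Sum>i<n. P u' i - P u i) = u' - u"
      using P that by (simp add: valid_plan_def sum_subtractf)
    moreover have "P u' i - P u i \<le> (\<Sum>i<n. P u' i - P u i)"
      by (rule member_le_sum) (use True P that in \<open>auto simp: valid_plan_def\<close>)
    ultimately show ?thesis by simp
  next
    case False then show ?thesis using P that by (simp add: valid_plan_def)
  qed
  then show ?thesis using P unfolding lip_plan_def valid_plan_def by auto
qed

lemma level_dig_0: "level_dig sg \<sigma> 0 i = 0"
  by (simp add: level_dig_def)

lemma level_dig_mono: assumes "u \<le> u'" shows "level_dig sg \<sigma> u i \<le> level_dig sg \<sigma> u' i"
proof -
  have "(effort \<sigma> + u) / card (sg (revealed \<sigma>)) \<le> (effort \<sigma> + u') / card (sg (revealed \<sigma>))"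
    using assms by (simp add: divide_right_mono)
  then show ?thesis unfolding level_dig_def by linarith
qed

lemma level_dig_lipschitz:
  assumes "u \<le> u'" "card (sg (revealed \<sigma>)) > 0"
  shows "level_dig sg \<sigma> u' i - level_dig sg \<sigma> u i \<le> (u' - u) / card (sg (revealed \<sigma>))"
proof -
  have "(effort \<sigma> + u') / card (sg (revealed \<sigma>)) - (effort \<sigma> + u) / card (sg (revealed \<sigma>)) = (u' - u) / card (sg (revealed \<sigma>))"
    by (simp only: diff_divide_distrib[symmetric]) simp
  moreover have "(effort \<sigma> + u) / card (sg (revealed \<sigma>)) \<le> (effort \<sigma> + u') / card (sg (revealed \<sigma>))"
    using assms by (simp add: divide_right_mono)
  ultimately show ?thesis unfolding level_dig_def by linarith
qed

lemma sum_level_dig_lipschitz: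
  assumes "u \<le> u'" "finite (sg (revealed \<sigma>))"
  shows "(\<Sum>y\<in>sg (revealed \<sigma>). level_dig sg \<sigma> u' y) - (\<Sum>y\<in>sg (revealed \<sigma>). level_dig sg \<sigma> u y) \<le> u' - u"
proof (cases "card (sg (revealed \<sigma>)) = 0")
  case True
  then show ?thesis using assms by simp
next
  case False
  have "(\<Sum>y\<in>sg (revealed \<sigma>). level_dig sg \<sigma> u' y) - (\<Sum>y\<in>sg (revealed \<sigma>). level_dig sg \<sigma> u y)
      = (\<Sum>y\<in>sg (revealed \<sigma>). level_dig sg \<sigma> u' y - level_dig sg \<sigma> u y)" by (simp add: sum_subtractf)
  also have "\<dots> \<le> (\<Sum>y\<in>sg (revealed \<sigma>). (u' - u) / card (sg (revealed \<sigma>)))"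
    by (rule sum_mono, rule level_dig_lipschitz) (use assms False in auto)
  also have "\<dots> = u' - u" using False by simp
  finally show ?thesis .
qed

lemma valid_plan_round_plan:
  assumes S: "sg (revealed \<sigma>) \<subseteq> {..<n}" and n: "0 < n"
  shows "valid_plan n (round_plan sg \<sigma>)"
proof -
  have fin: "finite (sg (revealed \<sigma>))" using S finite_subset by blast
  have "round_plan sg \<sigma> u i \<le> round_plan sg \<sigma> u' i" if "u \<le> u'" for u u' i
    using level_dig_mono[OF that, of sg \<sigma> i] sum_level_dig_lipschitz[of u u' sg \<sigma>, OF that fin] unfolding round_plan_def by auto
  moreover have "round_plan sg \<sigma> u i = 0" if "n \<le> i" for u i
    using S n that unfolding round_plan_def by auto
  moreover have "(\<Sum>i<n. round_plan sg \<sigma> u i) = u" for u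
  proof -
    have "(\<Sum>i<n. if i \<in> sg (revealed \<sigma>) then level_dig sg \<sigma> u i else 0) = (\<Sum>y\<in>sg (revealed \<sigma>). level_dig sg \<sigma> u y)"
      using S by (simp add: sum.If_cases Int_absorb1)
    then show ?thesis using n unfolding round_plan_def by (simp add: sum.distrib)
  qed
  ultimately show ?thesis unfolding valid_plan_def by (simp add: round_plan_def level_dig_0)
qed

lemma valid_plan_concat:
  assumes P: "valid_plan n P" and Q: "valid_plan n Q" and r: "0 \<le> r"
  shows "valid_plan n (\<lambda>u i. if u \<le> r then P u i else P r i + Q (u - r) i)"
proof -
  have mono: "(if u \<le> r then P u i else P r i + Q (u - r) i) \<le> (if u' \<le> r then P u' i else P r i + Q (u' - r) i)"
    if u: "0 \<le> u" "u \<le> u'" for u u' i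
  proof (cases "u' \<le> r")
    case True then show ?thesis using P u unfolding valid_plan_def by auto
  next
    case False
    have Q0: "0 \<le> Q (u' - r) i" using Q False unfolding valid_plan_def by (metis diff_ge_0_iff_ge nle_le)
    show ?thesis
    proof (cases "u \<le> r")
      case True
      then have "P u i \<le> P r i" using P u unfolding valid_plan_def by blast
      then show ?thesis using True False Q0 by simp
    next
      case u_gt: False
      then show ?thesis using Q u False unfolding valid_plan_def by (simp add: diff_right_mono)
    qed
  qed
  have "(\<Sum>i<n. if u \<le> r then P u i else P r i + Q (u - r) i) = u" if "0 \<le> u" for u
  proof (cases "u \<le> r")
    case False
    then have "(\<Sum>i<n. Q (u - r) i) = u - r" using Q unfolding valid_plan_def by simp
    then show ?thesis using P r False unfolding valid_plan_def by (simp add: sum.distrib)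
  qed (use P that in \<open>simp add: valid_plan_def\<close>)
  then show ?thesis using P Q r mono unfolding valid_plan_def by auto
qed

lemma valid_plan_plan:
  assumes S: "\<And>h. sg h \<subseteq> {..<n}" and n: "0 < n"
  shows "valid_plan n (plan sg d f \<sigma>)"
proof (induction f arbitrary: \<sigma>)
  case 0
  then show ?case using valid_plan_round_plan[OF S n] by (simp add: fun_eq_iff)
next
  case (Suc f)
  let ?r = "ready_effort sg \<sigma>" and ?\<sigma>' = "reveal_ready sg d (advance sg \<sigma> (ready_effort sg \<sigma>))"
  have "plan sg d (Suc f) \<sigma> = (if pending sg \<sigma> = {} then round_plan sg \<sigma>
      else (\<lambda>u i. if u \<le> ?r then round_plan sg \<sigma> u i else round_plan sg \<sigma> ?r i + plan sg d f ?\<sigma>' (u - ?r) i))"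
    by (auto simp: fun_eq_iff)
  moreover have "0 \<le> ?r" by (simp add: ready_effort_def)
  ultimately show ?case
    using valid_plan_round_plan[OF S n] valid_plan_concat[OF valid_plan_round_plan[OF S n] Suc.IH] by simp
qed

lemma caching_strategy_in_A_searcher:
  assumes "\<And>h. sg h \<subseteq> {..<n}" and "0 < n"
  shows "caching_strategy sg d \<in> A_searcher n"
  using valid_plan_plan[where sg=sg, OF assms] unfolding A_searcher_iff_valid_plan caching_strategy_def by blast

lemma Inf_reaching_set:
  fixes g :: "real \<Rightarrow> real"
  assumes lip: "\<And>u u'. 0 \<le> u \<Longrightarrow> u \<le> u' \<Longrightarrow> g u' - g u \<le> u' - u"
    and ne: "{u. 0 \<le> u \<and> u \<le> b \<and> c \<le> g u} \<noteq> {}"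
  shows "Inf {u. 0 \<le> u \<and> u \<le> b \<and> c \<le> g u} \<in> {u. 0 \<le> u \<and> u \<le> b \<and> c \<le> g u}
    \<and> (\<forall>u. 0 \<le> u \<and> u < Inf {u. 0 \<le> u \<and> u \<le> b \<and> c \<le> g u} \<longrightarrow> \<not> c \<le> g u)"
    (is "Inf ?R \<in> ?R \<and> _")
proof -
  have bdd: "bdd_below ?R" by (rule bdd_belowI[where m=0]) auto
  have t0: "0 \<le> Inf ?R" by (rule cInf_greatest[OF ne]) auto
  obtain u1 where u1: "u1 \<in> ?R" using ne by auto
  have tb: "Inf ?R \<le> b" using cInf_lower[OF u1 bdd] u1 by auto
  have "c \<le> g (Inf ?R)"
  proof (rule ccontr)
    assume "\<not> ?thesis"
    then have "Inf ?R < Inf ?R + (c - g (Inf ?R))" by simp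
    then obtain u where uR: "u \<in> ?R" and ul: "u < Inf ?R + (c - g (Inf ?R))" using cInf_lessD[OF ne] by blast
    have "g u - g (Inf ?R) \<le> u - Inf ?R" using lip[OF t0 cInf_lower[OF uR bdd]] .
    then show False using uR ul by simp
  qed
  then have "Inf ?R \<in> ?R" using t0 tb by simp
  moreover have "\<not> c \<le> g u" if "0 \<le> u" "u < Inf ?R" for u
    using cInf_lower[OF _ bdd, of u] that tb by force
  ultimately show ?thesis by blast
qed

section \<open>Runs of the simulating strategy\<close>

locale caching_run =
  fixes n d k :: nat and sg :: m_strat and hl :: "nat \<Rightarrow> real" and pl :: "nat \<Rightarrow> nat" and dp :: "nat \<Rightarrow> real"
  assumes n_pos: "0 < n" and sg_M: "sg \<in> M_searcher n k" and hider_A: "(hl, pl, dp) \<in> A_hider n d"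
begin

abbreviation at_place :: "nat \<Rightarrow> nat set" where "at_place x \<equiv> {j. j < d \<and> pl j = x}"
abbreviation found_at :: "nat set \<Rightarrow> nat \<Rightarrow> nat set" where "found_at F x \<equiv> {j\<in>F. pl j = x}"
abbreviation place_counts :: "nat set \<Rightarrow> nat \<Rightarrow> nat" where "place_counts N \<equiv> \<lambda>i. card {j\<in>N. pl j = i}"

definition kth_depth :: "nat \<Rightarrow> nat \<Rightarrow> real" where
  "kth_depth x m = kth_value (\<lambda>v. card {j\<in>at_place x. dp j \<le> v}) m"

text \<open>The potential of the cost argument.\<close>
definition remaining_depth :: "nat list \<Rightarrow> real" where
  "remaining_depth h = (\<Sum>x<n. kth_depth x (treasure_count pl d x) - kth_depth x (cnt x h))"

lemma place_lt: "j < d \<Longrightarrow> pl j < n" using hider_A by (auto simp: A_hider_def)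
lemma depth_nonneg: "j < d \<Longrightarrow> 0 \<le> dp j" using hider_A by (auto simp: A_hider_def)
lemma depth_le_hole: "j < d \<Longrightarrow> dp j \<le> hl (pl j)" using hider_A by (auto simp: A_hider_def)
lemma hole_nonneg: "0 \<le> hl x" using hider_A by (auto simp: A_hider_def)
lemma sum_holes_le_1: "(\<Sum>x<n. hl x) \<le> 1" using hider_A by (auto simp: A_hider_def)
lemma selected_sub: "sg h \<subseteq> {..<n}" using sg_M by (auto simp: M_searcher_def)
lemma finite_selected: "finite (sg h)" using selected_sub by (meson finite_lessThan finite_subset)
lemma card_selected_le: "card (sg h) \<le> k" using sg_M by (auto simp: M_searcher_def)

lemma lip_plan_plan: "lip_plan (plan sg d f \<sigma>)"
  by (rule valid_plan_lip_plan[OF valid_plan_plan[OF selected_sub n_pos]])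

lemma lip_plan_round_plan: "lip_plan (round_plan sg \<sigma>)"
  by (rule valid_plan_lip_plan[OF valid_plan_round_plan[OF selected_sub n_pos]])

lemma treasure_count_eq_card: "treasure_count pl d x = card (at_place x)" by (simp add: treasure_count_def)

lemma depth_gap_eq: "depth_gap pl dp d h x = kth_depth x (Suc (cnt x h)) - kth_depth x (cnt x h)"
  by (simp add: depth_gap_def kth_gap_def kth_depth_def)

lemma kth_depth_mono: "m \<le> m' \<Longrightarrow> m' \<le> treasure_count pl d x \<Longrightarrow> kth_depth x m \<le> kth_depth x m'"
  unfolding kth_depth_def treasure_count_eq_card by (rule kth_value_mono) (auto intro: depth_nonneg)

lemma kth_depth_le_iff: "1 \<le> m \<Longrightarrow> m \<le> treasure_count pl d x \<Longrightarrow> m \<le> card {j\<in>at_place x. dp j \<le> v} \<longleftrightarrow> kth_depth x m \<le> v"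
  unfolding kth_depth_def treasure_count_eq_card by (rule kth_value_le_iff) auto

lemma kth_depth_le_hole: "kth_depth x (treasure_count pl d x) \<le> hl x"
proof (cases "treasure_count pl d x = 0")
  case True then show ?thesis by (simp add: kth_depth_def kth_value_def hole_nonneg)
next
  case False
  then have "1 \<le> card (at_place x)" by (simp only: treasure_count_eq_card)
  moreover have "finite (at_place x)" by simp
  ultimately obtain j where "j \<in> at_place x" "dp j = kth_depth x (treasure_count pl d x)"
    using kth_value_attained[of "at_place x" "treasure_count pl d x" dp] unfolding kth_depth_def treasure_count_eq_card by blast
  then show ?thesis using depth_le_hole by force
qed

lemma depth_gap_nonneg: "cnt x h < treasure_count pl d x \<Longrightarrow> 0 \<le> depth_gap pl dp d h x"
  unfolding depth_gap_eq using kth_depth_mono[of "cnt x h" "Suc (cnt x h)" x] by simp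

lemma remaining_term_nonneg: "cnt x h \<le> treasure_count pl d x \<Longrightarrow> 0 \<le> kth_depth x (treasure_count pl d x) - kth_depth x (cnt x h)"
  using kth_depth_mono[of "cnt x h" "treasure_count pl d x" x] by simp

lemma depth_gap_le_remaining: assumes "\<forall>x. cnt x h \<le> treasure_count pl d x" "x < n" "cnt x h < treasure_count pl d x"
  shows "depth_gap pl dp d h x \<le> remaining_depth h"
proof -
  have "depth_gap pl dp d h x \<le> kth_depth x (treasure_count pl d x) - kth_depth x (cnt x h)"
    unfolding depth_gap_eq using kth_depth_mono[of "Suc (cnt x h)" "treasure_count pl d x" x] assms(3) by simp
  also have "\<dots> \<le> remaining_depth h" unfolding remaining_depth_def
    by (rule member_le_sum[where f="\<lambda>x. kth_depth x (treasure_count pl d x) - kth_depth x (cnt x h)"]) (use assms remaining_term_nonneg in auto)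
  finally show ?thesis .
qed

lemma remaining_depth_Nil: "remaining_depth [] \<le> 1"
proof -
  have "remaining_depth [] = (\<Sum>x<n. kth_depth x (treasure_count pl d x))" by (simp add: remaining_depth_def cnt_Nil kth_depth_def kth_value_def)
  also have "\<dots> \<le> (\<Sum>x<n. hl x)" by (rule sum_mono) (rule kth_depth_le_hole)
  finally show ?thesis using sum_holes_le_1 by simp
qed

lemma remaining_depth_snoc: "x < n \<Longrightarrow> remaining_depth (h @ [x]) = remaining_depth h - depth_gap pl dp d h x"
proof -
  assume xn: "x < n"
  have "remaining_depth (h @ [x]) = (\<Sum>y<n. kth_depth y (treasure_count pl d y) - kth_depth y (cnt y h)) - (\<Sum>y<n. (if x = y then depth_gap pl dp d h x else 0))"
    unfolding remaining_depth_def by (subst sum_subtractf[symmetric]) (rule sum.cong, auto simp: cnt_snoc depth_gap_eq)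
  also have "(\<Sum>y<n. (if x = y then depth_gap pl dp d h x else 0)) = depth_gap pl dp d h x" using xn by (simp add: sum.delta)
  finally show ?thesis by (simp add: remaining_depth_def)
qed


lemma sum_card_found_at: assumes "F \<subseteq> {..<d}" shows "(\<Sum>x<n. card (found_at F x)) = card F"
proof -
  have "(\<Sum>x<n. card (found_at F x)) = card (\<Union>x<n. found_at F x)"
  proof (rule card_UN_disjoint[symmetric])
    have "finite F" using assms finite_subset by blast
    then show "\<forall>i\<in>{..<n}. finite (found_at F i)" by auto
  qed auto
  also have "(\<Union>x<n. found_at F x) = F" using place_lt assms by auto
  finally show ?thesis by simp
qed

lemma treasure_count_pos_lt: "0 < treasure_count pl d x \<Longrightarrow> x < n"
proof -
  assume "0 < treasure_count pl d x"
  then have "at_place x \<noteq> {}" unfolding treasure_count_def by (metis card.empty less_irrefl)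
  then show "x < n" using place_lt by auto
qed

lemma length_lt_of_open: assumes "set h \<subseteq> {..<n}" "\<forall>x. cnt x h \<le> treasure_count pl d x" "cnt y h < treasure_count pl d y"
  shows "length h < d"
proof -
  have x0n: "y < n" using assms(3) treasure_count_pos_lt by simp
  have "length h = (\<Sum>x<n. cnt x h)" using length_eq_sum_cnt[OF assms(1)] .
  also have "\<dots> < (\<Sum>x<n. treasure_count pl d x)"
    by (rule sum_strict_mono_ex1) (use assms x0n in auto)
  finally show ?thesis using sum_treasure_count[OF place_lt] by simp
qed


text \<open>\<open>F\<close> is the set of treasures found so far and \<open>b\<close> the remaining budget.\<close>
definition run_inv :: "sim_state \<Rightarrow> nat set \<Rightarrow> real \<Rightarrow> bool" where
  "run_inv \<sigma> F b \<longleftrightarrow> F \<subseteq> {j. j < d \<and> dp j \<le> dug \<sigma> (pl j)} \<and> {j. j < d \<and> dp j < dug \<sigma> (pl j)} \<subseteq> F \<and>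
     (\<forall>x. found_upto \<sigma> x = (\<lambda>v. card {j\<in>found_at F x. dp j \<le> v})) \<and>
     (\<forall>x. cnt x (revealed \<sigma>) \<le> card (found_at F x)) \<and> set (revealed \<sigma>) \<subseteq> {..<n} \<and>
     m_win (treasure_count pl d) (min_gap_door pl dp d) sg (revealed \<sigma>) (d - length (revealed \<sigma>)) \<and> length (revealed \<sigma>) \<le> d \<and>
     0 \<le> effort \<sigma> \<and> (\<forall>x\<in>sg (revealed \<sigma>). revealed_depth \<sigma> x + level sg \<sigma> \<le> dug \<sigma> x) \<and> (\<forall>x. 0 \<le> dug \<sigma> x) \<and>
     (length (revealed \<sigma>) < d \<longrightarrow> (\<forall>x\<in>open_doors pl d (revealed \<sigma>) (sg (revealed \<sigma>)). level sg \<sigma> \<le> depth_gap pl dp d (revealed \<sigma>) x)) \<and>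
     real k * remaining_depth (revealed \<sigma>) \<le> b + effort \<sigma>"

text \<open>Between events the found treasures are exactly those above the dug depths.\<close>
definition settled_inv :: "sim_state \<Rightarrow> nat set \<Rightarrow> real \<Rightarrow> bool" where
  "settled_inv \<sigma> F b \<longleftrightarrow> run_inv \<sigma> F b \<and> F = {j. j < d \<and> dp j \<le> dug \<sigma> (pl j)}"

lemma run_inv_m_win: "run_inv \<sigma> F b \<Longrightarrow> m_win (treasure_count pl d) (min_gap_door pl dp d) sg (revealed \<sigma>) (d - length (revealed \<sigma>))" unfolding run_inv_def by (elim conjE)
lemma run_inv_revealed_doors: "run_inv \<sigma> F b \<Longrightarrow> set (revealed \<sigma>) \<subseteq> {..<n}" unfolding run_inv_def by (elim conjE)
lemma run_inv_length_le: "run_inv \<sigma> F b \<Longrightarrow> length (revealed \<sigma>) \<le> d" unfolding run_inv_def by (elim conjE)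
lemma run_inv_effort_nonneg: "run_inv \<sigma> F b \<Longrightarrow> 0 \<le> effort \<sigma>" unfolding run_inv_def by (elim conjE)
lemma run_inv_level_reached: "run_inv \<sigma> F b \<Longrightarrow> x \<in> sg (revealed \<sigma>) \<Longrightarrow> revealed_depth \<sigma> x + level sg \<sigma> \<le> dug \<sigma> x" unfolding run_inv_def by (elim conjE) blast
lemma run_inv_dug_nonneg: "run_inv \<sigma> F b \<Longrightarrow> 0 \<le> dug \<sigma> x" unfolding run_inv_def by (elim conjE) blast
lemma run_inv_level_le_gap: "run_inv \<sigma> F b \<Longrightarrow> length (revealed \<sigma>) < d \<Longrightarrow> x \<in> open_doors pl d (revealed \<sigma>) (sg (revealed \<sigma>)) \<Longrightarrow> level sg \<sigma> \<le> depth_gap pl dp d (revealed \<sigma>) x"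
  unfolding run_inv_def by (elim conjE) blast
lemma run_inv_budget: "run_inv \<sigma> F b \<Longrightarrow> real k * remaining_depth (revealed \<sigma>) \<le> b + effort \<sigma>" unfolding run_inv_def by (elim conjE)

lemma run_invI:
  assumes "F \<subseteq> {j. j < d \<and> dp j \<le> dug \<sigma> (pl j)}" "{j. j < d \<and> dp j < dug \<sigma> (pl j)} \<subseteq> F"
     "\<And>x. found_upto \<sigma> x = (\<lambda>v. card {j\<in>found_at F x. dp j \<le> v})"
     "\<And>x. cnt x (revealed \<sigma>) \<le> card (found_at F x)" "set (revealed \<sigma>) \<subseteq> {..<n}"
     "m_win (treasure_count pl d) (min_gap_door pl dp d) sg (revealed \<sigma>) (d - length (revealed \<sigma>))" "length (revealed \<sigma>) \<le> d"
     "0 \<le> effort \<sigma>" "\<And>x. x \<in> sg (revealed \<sigma>) \<Longrightarrow> revealed_depth \<sigma> x + level sg \<sigma> \<le> dug \<sigma> x" "\<And>x. 0 \<le> dug \<sigma> x"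
     "\<And>x. length (revealed \<sigma>) < d \<Longrightarrow> x \<in> open_doors pl d (revealed \<sigma>) (sg (revealed \<sigma>)) \<Longrightarrow> level sg \<sigma> \<le> depth_gap pl dp d (revealed \<sigma>) x"
     "real k * remaining_depth (revealed \<sigma>) \<le> b + effort \<sigma>"
  shows "run_inv \<sigma> F b"
  unfolding run_inv_def using assms by blast

lemma run_inv_found_reached: "run_inv \<sigma> F b \<Longrightarrow> F \<subseteq> {j. j < d \<and> dp j \<le> dug \<sigma> (pl j)}" unfolding run_inv_def by (elim conjE)
lemma run_inv_passed_found: "run_inv \<sigma> F b \<Longrightarrow> {j. j < d \<and> dp j < dug \<sigma> (pl j)} \<subseteq> F" unfolding run_inv_def by (elim conjE)
lemma run_inv_found_upto: "run_inv \<sigma> F b \<Longrightarrow> found_upto \<sigma> x = (\<lambda>v. card {j\<in>found_at F x. dp j \<le> v})" unfolding run_inv_def by (elim conjE) blast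
lemma run_inv_cnt: "run_inv \<sigma> F b \<Longrightarrow> cnt x (revealed \<sigma>) \<le> card (found_at F x)" unfolding run_inv_def by (elim conjE) blast

lemma kth_value_found_eq:
  assumes a: "F \<subseteq> {j. j < d \<and> dp j \<le> cur (pl j)}" and b: "{j. j < d \<and> dp j < cur (pl j)} \<subseteq> F"
    and m: "m \<le> card (found_at F x)"
  shows "kth_value (\<lambda>v. card {j\<in>found_at F x. dp j \<le> v}) m = kth_depth x m"
  unfolding kth_depth_def
proof (rule kth_value_cong)
  fix v
  have fin: "finite (at_place x)" by simp
  have sub: "{j\<in>found_at F x. dp j \<le> v} \<subseteq> {j\<in>at_place x. dp j \<le> v}" using a by auto
  show "m \<le> card {j\<in>found_at F x. dp j \<le> v} \<longleftrightarrow> m \<le> card {j\<in>at_place x. dp j \<le> v}"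
  proof (cases "v < cur x")
    case True
    have "{j\<in>found_at F x. dp j \<le> v} = {j\<in>at_place x. dp j \<le> v}"
    proof
      show "{j\<in>at_place x. dp j \<le> v} \<subseteq> {j\<in>found_at F x. dp j \<le> v}" using b True by force
    qed (rule sub)
    then show ?thesis by simp
  next
    case False
    have e: "{j\<in>found_at F x. dp j \<le> v} = found_at F x" using a False by force
    have "card {j\<in>found_at F x. dp j \<le> v} \<le> card {j\<in>at_place x. dp j \<le> v}"
      by (rule card_mono[OF _ sub]) simp
    then show ?thesis using e m by auto
  qed
qed

lemma run_inv_found_sub: "run_inv \<sigma> F b \<Longrightarrow> F \<subseteq> {..<d}"
proof
  fix j assume "run_inv \<sigma> F b" "j \<in> F"
  then have "j \<in> {j. j < d \<and> dp j \<le> dug \<sigma> (pl j)}" by (rule subsetD[OF run_inv_found_reached])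
  then show "j \<in> {..<d}" by simp
qed
lemma run_inv_finite_found: "run_inv \<sigma> F b \<Longrightarrow> finite F" by (rule finite_subset[OF run_inv_found_sub finite_lessThan])

lemma card_found_at_le: "F \<subseteq> {..<d} \<Longrightarrow> card (found_at F x) \<le> treasure_count pl d x"
  unfolding treasure_count_def by (rule card_mono) auto

lemma run_inv_cnt_le: "run_inv \<sigma> F b \<Longrightarrow> cnt x (revealed \<sigma>) \<le> treasure_count pl d x"
  using card_found_at_le[OF run_inv_found_sub, of \<sigma> F b x] run_inv_cnt[of \<sigma> F b x] by linarith

lemma run_inv_kth_value: assumes "run_inv \<sigma> F b" "m \<le> card (found_at F x)" shows "kth_value (found_upto \<sigma> x) m = kth_depth x m"
proof -
  have "found_upto \<sigma> x = (\<lambda>v. card {j\<in>found_at F x. dp j \<le> v})" by (rule run_inv_found_upto[OF assms(1)])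
  then show ?thesis using kth_value_found_eq[OF run_inv_found_reached[OF assms(1)] run_inv_passed_found[OF assms(1)] assms(2)] by simp
qed

lemma run_inv_revealed_depth: "run_inv \<sigma> F b \<Longrightarrow> revealed_depth \<sigma> x = kth_depth x (cnt x (revealed \<sigma>))"
  unfolding revealed_depth_def by (rule run_inv_kth_value[OF _ run_inv_cnt])

lemma run_inv_pending_iff: "run_inv \<sigma> F b \<Longrightarrow> x \<in> pending sg \<sigma> \<longleftrightarrow> x \<in> sg (revealed \<sigma>) \<and> cnt x (revealed \<sigma>) < card {j\<in>found_at F x. dp j \<le> dug \<sigma> x}"
  unfolding pending_def using run_inv_found_upto[of \<sigma> F b x] by simp

lemma run_inv_pending_lt: "run_inv \<sigma> F b \<Longrightarrow> x \<in> pending sg \<sigma> \<Longrightarrow> cnt x (revealed \<sigma>) < card (found_at F x)"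
proof -
  assume I: "run_inv \<sigma> F b" and x: "x \<in> pending sg \<sigma>"
  have "card {j\<in>found_at F x. dp j \<le> dug \<sigma> x} \<le> card (found_at F x)"
    by (rule card_mono) (use run_inv_finite_found[OF I] in auto)
  then show ?thesis using run_inv_pending_iff[OF I] x by auto
qed

lemma run_inv_known_gap: "run_inv \<sigma> F b \<Longrightarrow> x \<in> pending sg \<sigma> \<Longrightarrow> known_gap \<sigma> x = depth_gap pl dp d (revealed \<sigma>) x"
proof -
  assume I: "run_inv \<sigma> F b" and x: "x \<in> pending sg \<sigma>"
  have lt: "cnt x (revealed \<sigma>) < card (found_at F x)" by (rule run_inv_pending_lt[OF I x])
  have "kth_value (found_upto \<sigma> x) (Suc (cnt x (revealed \<sigma>))) = kth_depth x (Suc (cnt x (revealed \<sigma>)))"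
    using lt by (intro run_inv_kth_value[OF I]) simp
  moreover have "kth_value (found_upto \<sigma> x) (cnt x (revealed \<sigma>)) = kth_depth x (cnt x (revealed \<sigma>))"
    using lt by (intro run_inv_kth_value[OF I]) simp
  ultimately show ?thesis unfolding known_gap_def kth_gap_def depth_gap_eq by simp
qed

lemma run_inv_pending_sub_open: "run_inv \<sigma> F b \<Longrightarrow> pending sg \<sigma> \<subseteq> open_doors pl d (revealed \<sigma>) (sg (revealed \<sigma>))"
proof
  fix x assume I: "run_inv \<sigma> F b" and x: "x \<in> pending sg \<sigma>"
  have "cnt x (revealed \<sigma>) < treasure_count pl d x" using run_inv_pending_lt[OF I x] card_found_at_le[OF run_inv_found_sub[OF I], of x] by linarith
  then show "x \<in> open_doors pl d (revealed \<sigma>) (sg (revealed \<sigma>))" using x by (auto simp: open_doors_def pending_def)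
qed

lemma run_inv_length_lt: "run_inv \<sigma> F b \<Longrightarrow> x \<in> open_doors pl d (revealed \<sigma>) (sg (revealed \<sigma>)) \<Longrightarrow> length (revealed \<sigma>) < d"
proof -
  assume I: "run_inv \<sigma> F b" and x: "x \<in> open_doors pl d (revealed \<sigma>) (sg (revealed \<sigma>))"
  show ?thesis by (rule length_lt_of_open[of "revealed \<sigma>" x]) (use I x run_inv_cnt_le[OF I] in \<open>auto simp: run_inv_def open_doors_def\<close>)
qed

lemma run_inv_open_nonempty: "run_inv \<sigma> F b \<Longrightarrow> length (revealed \<sigma>) < d \<Longrightarrow> open_doors pl d (revealed \<sigma>) (sg (revealed \<sigma>)) \<noteq> {}"
proof -
  assume I: "run_inv \<sigma> F b" and l: "length (revealed \<sigma>) < d"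
  define r where "r = d - length (revealed \<sigma>) - 1"
  have r: "d - length (revealed \<sigma>) = Suc r" using l unfolding r_def by simp
  have "m_win (treasure_count pl d) (min_gap_door pl dp d) sg (revealed \<sigma>) (Suc r)" using I r by (simp add: run_inv_def)
  then show ?thesis by (auto simp: open_doors_def)
qed

lemma run_inv_length_le_card: assumes "run_inv \<sigma> F b" shows "length (revealed \<sigma>) \<le> card F"
proof -
  have "length (revealed \<sigma>) = (\<Sum>x<n. cnt x (revealed \<sigma>))" using assms by (intro length_eq_sum_cnt) (simp add: run_inv_def)
  also have "\<dots> \<le> (\<Sum>x<n. card (found_at F x))" by (rule sum_mono) (use assms in \<open>simp add: run_inv_def\<close>)
  also have "\<dots> = card F" by (rule sum_card_found_at[OF run_inv_found_sub[OF assms]])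
  finally show ?thesis .
qed

lemma run_inv_length_lt_d: assumes "run_inv \<sigma> F b" "\<not> {..<d} \<subseteq> F" shows "length (revealed \<sigma>) < d"
proof -
  have "F \<subset> {..<d}" using run_inv_found_sub[OF assms(1)] assms(2) by auto
  then have "card F < card {..<d}" by (rule psubset_card_mono[OF finite_lessThan])
  then have "card F < d" by simp
  then show ?thesis using run_inv_length_le_card[OF assms(1)] by simp
qed

lemma settled_kth_depth_le_dug:
  assumes P: "settled_inv \<sigma> F b" and m: "m \<le> card (found_at F x)"
  shows "kth_depth x m \<le> dug \<sigma> x"
proof (cases "m = 0")
  case True
  have "0 \<le> dug \<sigma> x" using P run_inv_dug_nonneg unfolding settled_inv_def by blast
  then show ?thesis using True by (simp add: kth_depth_def kth_value_def)
next
  case False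
  have F: "F = {j. j < d \<and> dp j \<le> dug \<sigma> (pl j)}" using P by (simp add: settled_inv_def)
  then have "found_at F x = {j\<in>at_place x. dp j \<le> dug \<sigma> x}" and "F \<subseteq> {..<d}" by auto
  moreover from this(2) have "m \<le> treasure_count pl d x" using m card_found_at_le[of F x] by linarith
  ultimately show ?thesis using kth_depth_le_iff[of m x "dug \<sigma> x"] False m by simp
qed


lemma settled_ready_eq_min_gap:
  assumes P: "settled_inv \<sigma> F b" and R: "ready sg \<sigma> \<noteq> {}"
  defines "A \<equiv> open_doors pl d (revealed \<sigma>) (sg (revealed \<sigma>))" and "gp \<equiv> depth_gap pl dp d (revealed \<sigma>)"
  shows "level sg \<sigma> = Min (gp ` A)" and "ready sg \<sigma> = {x\<in>A. gp x = Min (gp ` A)}"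
proof -
  have I: "run_inv \<sigma> F b" and Fst: "F = {j. j < d \<and> dp j \<le> dug \<sigma> (pl j)}" using P by (auto simp: settled_inv_def)
  let ?h = "revealed \<sigma>" and ?g = "Min (gp ` A)"
  have RA: "ready sg \<sigma> \<subseteq> A" using run_inv_pending_sub_open[OF I] unfolding A_def ready_def by auto
  have Afin: "finite A" unfolding A_def by (rule finite_open_doors)
  obtain x0 where x0: "x0 \<in> ready sg \<sigma>" using R by auto
  have lenlt: "length ?h < d" using run_inv_length_lt[OF I] RA x0 unfolding A_def by auto
  have level_le: "\<And>y. y \<in> A \<Longrightarrow> level sg \<sigma> \<le> gp y" using run_inv_level_le_gap[OF I lenlt] unfolding A_def gp_def by auto
  have ready_le: "\<And>x. x \<in> ready sg \<sigma> \<Longrightarrow> gp x \<le> level sg \<sigma>"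
    using run_inv_known_gap[OF I] unfolding ready_def gp_def by auto
  have g_le: "\<And>y. y \<in> A \<Longrightarrow> ?g \<le> gp y" using Afin by auto
  have "level sg \<sigma> \<le> ?g" using Afin RA x0 level_le by (intro Min.boundedI) auto
  then show level_eq: "level sg \<sigma> = ?g" using ready_le[OF x0] g_le[of x0] RA x0 by force
  show "ready sg \<sigma> = {x\<in>A. gp x = ?g}"
  proof
    show "ready sg \<sigma> \<subseteq> {x\<in>A. gp x = ?g}" using RA ready_le level_eq g_le by force
    show "{x\<in>A. gp x = ?g} \<subseteq> ready sg \<sigma>"
    proof
      fix x assume xA: "x \<in> {x\<in>A. gp x = ?g}"
      then have xS: "x \<in> sg ?h" and xc: "Suc (cnt x ?h) \<le> treasure_count pl d x" by (auto simp: A_def open_doors_def)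
      have "kth_depth x (Suc (cnt x ?h)) = revealed_depth \<sigma> x + level sg \<sigma>"
        using run_inv_revealed_depth[OF I] xA level_eq unfolding gp_def depth_gap_eq by simp
      also have "\<dots> \<le> dug \<sigma> x" using run_inv_level_reached[OF I xS] .
      finally have "Suc (cnt x ?h) \<le> card {j\<in>at_place x. dp j \<le> dug \<sigma> x}"
        using kth_depth_le_iff[of "Suc (cnt x ?h)" x "dug \<sigma> x"] xc by simp
      moreover have found_eq: "{j\<in>found_at F x. dp j \<le> dug \<sigma> x} = {j\<in>at_place x. dp j \<le> dug \<sigma> x}"
        using Fst by auto
      ultimately have "x \<in> pending sg \<sigma>" using run_inv_pending_iff[OF I] xS by auto
      moreover have "known_gap \<sigma> x \<le> level sg \<sigma>" using run_inv_known_gap[OF I calculation] xA level_eq unfolding gp_def by simp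
      ultimately show "x \<in> ready sg \<sigma>" unfolding ready_def by simp
    qed
  qed
qed

lemma settled_min_gap_door:
  assumes "settled_inv \<sigma> F b" and "ready sg \<sigma> \<noteq> {}"
  shows "min_gap_door pl dp d (revealed \<sigma>) (sg (revealed \<sigma>)) = Min (ready sg \<sigma>)"
  using settled_ready_eq_min_gap[OF assms] assms(2) unfolding min_gap_door_def by auto

text \<open>The potential argument: a round in which the level rises by the gap of the revealed door
  costs at most \<open>k\<close> times that gap, which is exactly the decrease of \<open>remaining_depth\<close>.\<close>
lemma run_inv_budget_reveal:
  assumes I: "run_inv \<sigma> F b" and x: "x \<in> sg (revealed \<sigma>)"
    and gap: "depth_gap pl dp d (revealed \<sigma>) x = level sg \<sigma>" and nonneg: "0 \<le> level sg \<sigma>"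
  shows "real k * remaining_depth (revealed \<sigma> @ [x]) \<le> b"
proof -
  let ?h = "revealed \<sigma>"
  have "0 < card (sg ?h)" using x finite_selected card_gt_0_iff by blast
  then have "effort \<sigma> = card (sg ?h) * level sg \<sigma>" unfolding level_def by simp
  also have "\<dots> \<le> real k * level sg \<sigma>" using card_selected_le[of ?h] nonneg by (simp add: mult_right_mono)
  finally have "real k * remaining_depth ?h \<le> b + real k * level sg \<sigma>" using run_inv_budget[OF I] by simp
  moreover have "remaining_depth (?h @ [x]) = remaining_depth ?h - level sg \<sigma>"
    using remaining_depth_snoc x selected_sub gap by (metis lessThan_iff subsetD)
  ultimately show ?thesis by (simp add: right_diff_distrib)
qed

lemma reveal_step:
  assumes P: "settled_inv \<sigma> F b" and R: "ready sg \<sigma> \<noteq> {}"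
  shows "settled_inv (State (revealed \<sigma> @ [Min (ready sg \<sigma>)]) (dug \<sigma>) (found_upto \<sigma>) 0) F b \<and> length (revealed \<sigma>) < d"
proof -
  have I: "run_inv \<sigma> F b" and Fst: "F = {j. j < d \<and> dp j \<le> dug \<sigma> (pl j)}" using P by (auto simp: settled_inv_def)
  define h where "h = revealed \<sigma>"
  define lvv where "lvv = level sg \<sigma>"
  define x where "x = Min (ready sg \<sigma>)"
  have Rfin: "finite (ready sg \<sigma>)" unfolding ready_def pending_def using finite_selected by auto
  have xR: "x \<in> ready sg \<sigma>" unfolding x_def using Rfin R by (intro Min_in) auto
  have xp: "x \<in> pending sg \<sigma>" using xR unfolding ready_def by simp
  have xA: "x \<in> open_doors pl d h (sg h)" using run_inv_pending_sub_open[OF I] xp unfolding h_def by auto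
  have lenlt: "length h < d" using run_inv_length_lt[OF I] xA unfolding h_def by auto
  have xS: "x \<in> sg h" using xA by (simp add: open_doors_def)
  have xn: "x < n" using xS selected_sub by auto
  have xlt: "cnt x h < card (found_at F x)" using run_inv_pending_lt[OF I xp] unfolding h_def .
  have gx: "depth_gap pl dp d h x = lvv" using settled_ready_eq_min_gap[OF P R] xR unfolding h_def lvv_def by auto
  have rho: "min_gap_door pl dp d h (sg h) = x" using settled_min_gap_door[OF P R] unfolding h_def x_def .
  have lvv_nn: "0 \<le> lvv" using gx depth_gap_nonneg[of x h] xA unfolding open_doors_def by simp
  define \<sigma>' where "\<sigma>' = State (h @ [x]) (dug \<sigma>) (found_upto \<sigma>) 0"
  have cnt': "\<And>y. cnt y (revealed \<sigma>') \<le> card (found_at F y)"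
    using run_inv_cnt[OF I] xlt unfolding \<sigma>'_def h_def by (auto simp: cnt_snoc)
  have found_upto': "\<And>y. found_upto \<sigma>' y = (\<lambda>v. card {j\<in>found_at F y. dp j \<le> v})" using run_inv_found_upto[OF I] unfolding \<sigma>'_def by simp
  have "d - length h = Suc (d - length (revealed \<sigma>'))" using lenlt unfolding \<sigma>'_def by simp
  then have mw: "m_win (treasure_count pl d) (min_gap_door pl dp d) sg (revealed \<sigma>') (d - length (revealed \<sigma>'))"
    using run_inv_m_win[OF I] rho unfolding \<sigma>'_def h_def by simp
  have run_inv': "run_inv \<sigma>' F b"
  proof (rule run_invI)
    show "F \<subseteq> {j. j < d \<and> dp j \<le> dug \<sigma>' (pl j)}" using run_inv_found_reached[OF I] unfolding \<sigma>'_def by simp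
    show "{j. j < d \<and> dp j < dug \<sigma>' (pl j)} \<subseteq> F" using run_inv_passed_found[OF I] unfolding \<sigma>'_def by simp
    show "\<And>y. found_upto \<sigma>' y = (\<lambda>v. card {j\<in>found_at F y. dp j \<le> v})" by (rule found_upto')
    show "\<And>y. cnt y (revealed \<sigma>') \<le> card (found_at F y)" by (rule cnt')
    show "set (revealed \<sigma>') \<subseteq> {..<n}" using run_inv_revealed_doors[OF I] xn unfolding \<sigma>'_def h_def by simp
    show "m_win (treasure_count pl d) (min_gap_door pl dp d) sg (revealed \<sigma>') (d - length (revealed \<sigma>'))" by (rule mw)
    show "length (revealed \<sigma>') \<le> d" using lenlt unfolding \<sigma>'_def by simp
    show "0 \<le> effort \<sigma>'" unfolding \<sigma>'_def by simp
    show "0 \<le> dug \<sigma>' y" for y using run_inv_dug_nonneg[OF I] unfolding \<sigma>'_def by simp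
    show "revealed_depth \<sigma>' y + level sg \<sigma>' \<le> dug \<sigma>' y" if "y \<in> sg (revealed \<sigma>')" for y
    proof -
      have "revealed_depth \<sigma>' y = kth_depth y (cnt y (revealed \<sigma>'))"
        unfolding revealed_depth_def using kth_value_found_eq[OF run_inv_found_reached[OF I] run_inv_passed_found[OF I] cnt'[of y]] found_upto' by simp
      then show ?thesis using settled_kth_depth_le_dug[OF P cnt'] unfolding \<sigma>'_def level_def by simp
    qed
    show "level sg \<sigma>' \<le> depth_gap pl dp d (revealed \<sigma>') y"
      if "length (revealed \<sigma>') < d" "y \<in> open_doors pl d (revealed \<sigma>') (sg (revealed \<sigma>'))" for y
      using depth_gap_nonneg[of y "revealed \<sigma>'"] that unfolding \<sigma>'_def level_def open_doors_def by simp
    show "real k * remaining_depth (revealed \<sigma>') \<le> b + effort \<sigma>'"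
      using run_inv_budget_reveal[OF I xS[unfolded h_def] gx[unfolded h_def lvv_def] lvv_nn[unfolded lvv_def]]
      unfolding \<sigma>'_def h_def by simp
  qed
  have "settled_inv \<sigma>' F b" unfolding settled_inv_def using run_inv' Fst unfolding \<sigma>'_def by simp
  then show ?thesis using lenlt unfolding \<sigma>'_def x_def h_def by simp
qed


lemma reveal_ready_props:
  assumes "settled_inv \<sigma> F b" "d \<le> f + length (revealed \<sigma>)"
  shows "settled_inv (reveal_ready sg f \<sigma>) F b \<and> dug (reveal_ready sg f \<sigma>) = dug \<sigma> \<and>
         length (revealed \<sigma>) \<le> length (revealed (reveal_ready sg f \<sigma>)) \<and>
         (ready sg \<sigma> \<noteq> {} \<longrightarrow> length (revealed \<sigma>) < length (revealed (reveal_ready sg f \<sigma>)))"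
  using assms
proof (induction f arbitrary: \<sigma>)
  case 0
  then have "ready sg \<sigma> = {}" using reveal_step by fastforce
  then show ?case using 0 by simp
next
  case (Suc f)
  show ?case
  proof (cases "ready sg \<sigma> = {}")
    case True then show ?thesis using Suc.prems by simp
  next
    case False
    let ?\<sigma>' = "State (revealed \<sigma> @ [Min (ready sg \<sigma>)]) (dug \<sigma>) (found_upto \<sigma>) 0"
    have r: "settled_inv ?\<sigma>' F b" using reveal_step[OF Suc.prems(1) False] by simp
    have "d \<le> f + length (revealed ?\<sigma>')" using Suc.prems(2) by simp
    from Suc.IH[OF r this] False show ?thesis by simp
  qed
qed

definition hits :: "(real \<Rightarrow> nat \<Rightarrow> real) \<Rightarrow> (nat \<Rightarrow> real) \<Rightarrow> nat set \<Rightarrow> real \<Rightarrow> bool" where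
  "hits P cur F u \<longleftrightarrow> (\<exists>j. j < d \<and> j \<notin> F \<and> dp j \<le> cur (pl j) + P u (pl j))"

definition first_hit :: "(real \<Rightarrow> nat \<Rightarrow> real) \<Rightarrow> (nat \<Rightarrow> real) \<Rightarrow> nat set \<Rightarrow> real \<Rightarrow> bool" where
  "first_hit P cur F u \<longleftrightarrow> 0 \<le> u \<and> hits P cur F u \<and> (\<forall>u'. 0 \<le> u' \<and> u' < u \<longrightarrow> \<not> hits P cur F u')"

definition hit_set :: "(real \<Rightarrow> nat \<Rightarrow> real) \<Rightarrow> (nat \<Rightarrow> real) \<Rightarrow> nat set \<Rightarrow> real \<Rightarrow> nat set" where
  "hit_set P cur F u = {j. j < d \<and> j \<notin> F \<and> dp j \<le> cur (pl j) + P u (pl j)}"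

lemma hits_shift:
  assumes "\<forall>v x. 0 \<le> v \<longrightarrow> cur' x + P' v x = cur x + P (a + v) x" "0 \<le> w"
  shows "hits P' cur' F w = hits P cur F (a + w)"
  using assms unfolding hits_def by simp

lemma hit_set_shift:
  assumes "\<forall>v x. 0 \<le> v \<longrightarrow> cur' x + P' v x = cur x + P (a + v) x" "0 \<le> w"
  shows "hit_set P' cur' F w = hit_set P cur F (a + w)"
  using assms unfolding hit_set_def by simp

lemma first_hit_shift:
  assumes sh: "\<forall>v x. 0 \<le> v \<longrightarrow> cur' x + P' v x = cur x + P (a + v) x" and a0: "0 \<le> a"
    and F: "first_hit P cur F u" and au: "a < u"
  shows "first_hit P' cur' F (u - a)"
proof -
  have "hits P' cur' F (u - a)" using hits_shift[OF sh, of "u - a" F] au F by (simp add: first_hit_def)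
  moreover have "\<not> hits P' cur' F w" if "0 \<le> w" "w < u - a" for w
    using hits_shift[OF sh that(1), of F] F that a0 by (simp add: first_hit_def)
  ultimately show ?thesis using au by (simp add: first_hit_def)
qed

text \<open>The event computed in \<open>a_win\<close> as the infimum of hitting efforts is the first hit.\<close>
lemma first_hit_exists:
  assumes lip_plan: "lip_plan P" and u0: "0 \<le> u0" "u0 \<le> b" "hits P cur F u0"
  defines "R \<equiv> \<lambda>j. {u. 0 \<le> u \<and> u \<le> b \<and> dp j \<le> cur (pl j) + P u (pl j)}"
  defines "U \<equiv> {j. j < d \<and> j \<notin> F \<and> R j \<noteq> {}}"
  defines "t \<equiv> \<lambda>j. Inf (R j)"
  defines "us \<equiv> Min (t ` U)"
  shows "U \<noteq> {} \<and> first_hit P cur F us \<and> us \<le> b \<and> {j \<in> U. t j = us} = hit_set P cur F us \<and> {j \<in> U. t j = us} \<noteq> {}"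
proof -
  have Ufin: "finite U" unfolding U_def by simp
  obtain j0 where j0: "j0 < d" "j0 \<notin> F" "dp j0 \<le> cur (pl j0) + P u0 (pl j0)" using u0 by (auto simp: hits_def)
  have "u0 \<in> R j0" using j0 u0 by (simp add: R_def)
  then have j0U: "j0 \<in> U" using j0 by (auto simp: U_def)
  then have Une: "U \<noteq> {}" by auto
  have tR: "t j \<in> R j \<and> (\<forall>u. 0 \<le> u \<and> u < t j \<longrightarrow> \<not> dp j \<le> cur (pl j) + P u (pl j))" if jU: "j \<in> U" for j
  proof -
    have "R j \<noteq> {}" using jU by (simp add: U_def)
    then show ?thesis unfolding t_def R_def
      by (intro Inf_reaching_set[where g="\<lambda>u. cur (pl j) + P u (pl j)"]) (use lip_plan_lipschitz[OF lip_plan] in auto)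
  qed
  have usin: "us \<in> t ` U" unfolding us_def using Ufin Une by (intro Min_in) auto
  have usle: "\<And>j. j \<in> U \<Longrightarrow> us \<le> t j" unfolding us_def using Ufin by auto
  obtain j1 where j1: "j1 \<in> U" "t j1 = us" using usin by auto
  have us_nn: "0 \<le> us" and usb: "us \<le> b" using tR[OF j1(1)] j1 by (auto simp: R_def)
  have hit: "hits P cur F us" using tR[OF j1(1)] j1 by (auto simp: hits_def R_def U_def)
  have nohit: "\<not> hits P cur F u'" if "0 \<le> u'" "u' < us" for u'
  proof
    assume "hits P cur F u'"
    then obtain j where j: "j < d" "j \<notin> F" "dp j \<le> cur (pl j) + P u' (pl j)" by (auto simp: hits_def)
    have "u' \<in> R j" using j that usb by (simp add: R_def)
    then have "j \<in> U" using j by (auto simp: U_def)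
    then have "us \<le> t j" by (rule usle)
    then show False using tR[OF \<open>j \<in> U\<close>] that j by auto
  qed
  have Neq: "{j \<in> U. t j = us} = hit_set P cur F us"
  proof
    show "{j \<in> U. t j = us} \<subseteq> hit_set P cur F us" using tR by (auto simp: hit_set_def U_def R_def)
    show "hit_set P cur F us \<subseteq> {j \<in> U. t j = us}"
    proof
      fix j assume j: "j \<in> hit_set P cur F us"
      then have "us \<in> R j" using us_nn usb by (simp add: hit_set_def R_def)
      then have jU: "j \<in> U" using j by (auto simp: U_def hit_set_def)
      have "t j \<le> us"
      proof -
        have "bdd_below (R j)" unfolding R_def by (rule bdd_belowI[where m=0]) auto
        then show ?thesis unfolding t_def using \<open>us \<in> R j\<close> by (rule cInf_lower[rotated])
      qed
      then show "j \<in> {j \<in> U. t j = us}" using usle[OF jU] jU by simp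
    qed
  qed
  have "first_hit P cur F us" unfolding first_hit_def using us_nn hit nohit by auto
  moreover have "{j \<in> U. t j = us} \<noteq> {}" using j1 by auto
  ultimately show ?thesis using Une usb Neq by simp
qed

lemma first_hit_exact_depth:
  assumes lip_plan: "lip_plan P" and u0: "0 \<le> u" and nb: "\<forall>u'. 0 \<le> u' \<and> u' < u \<longrightarrow> \<not> hits P cur F u'"
    and j: "j \<in> hit_set P cur F u" and c: "cur (pl j) \<le> dp j"
  shows "dp j = cur (pl j) + P u (pl j)"
proof (rule ccontr)
  assume ne: "\<not> ?thesis"
  have le: "dp j \<le> cur (pl j) + P u (pl j)" using j by (simp add: hit_set_def)
  define \<epsilon> where "\<epsilon> = cur (pl j) + P u (pl j) - dp j"
  have ep: "0 < \<epsilon>" using le ne \<epsilon>_def by simp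
  define u' where "u' = max 0 (u - \<epsilon>/2)"
  have u'0: "0 \<le> u'" by (simp add: u'_def)
  have u'u: "u' \<le> u" using u0 ep by (simp add: u'_def)
  have "P u (pl j) - P u' (pl j) \<le> u - u'" using lip_plan_lipschitz[OF lip_plan u'0 u'u] .
  moreover have "u - \<epsilon>/2 \<le> u'" unfolding u'_def by simp
  then have "u - u' \<le> \<epsilon>/2" by linarith
  ultimately have h: "dp j \<le> cur (pl j) + P u' (pl j)" using \<epsilon>_def ep by simp
  show False
  proof (cases "u = 0")
    case True
    then have "P u (pl j) = 0" using lip_plan_0[OF lip_plan] by simp
    then show False using c ne True le by simp
  next
    case False
    then have "u' < u" using u0 ep by (simp add: u'_def)
    moreover have "hits P cur F u'" using h j unfolding hits_def hit_set_def by auto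
    ultimately show False using nb u'0 by auto
  qed
qed


lemma round_plan_reaches_level:
  assumes I: "run_inv \<sigma> F b" and x: "x \<in> sg (revealed \<sigma>)" and u: "0 \<le> u"
  shows "revealed_depth \<sigma> x + (effort \<sigma> + u) / card (sg (revealed \<sigma>)) \<le> dug \<sigma> x + round_plan sg \<sigma> u x"
proof -
  let ?s = "card (sg (revealed \<sigma>))"
  have "revealed_depth \<sigma> x + level sg \<sigma> \<le> dug \<sigma> x" by (rule run_inv_level_reached[OF I x])
  then have z: "max 0 (revealed_depth \<sigma> x + effort \<sigma> / ?s - dug \<sigma> x) = 0" by (simp add: level_def)
  have dgx: "revealed_depth \<sigma> x + (effort \<sigma> + u) / ?s - dug \<sigma> x \<le> level_dig sg \<sigma> u x" unfolding level_dig_def z by simp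
  have "(\<Sum>y\<in>sg (revealed \<sigma>). level_dig sg \<sigma> u y) - (\<Sum>y\<in>sg (revealed \<sigma>). level_dig sg \<sigma> 0 y) \<le> u - 0"
    by (rule sum_level_dig_lipschitz[OF u finite_selected])
  then have "0 \<le> u - (\<Sum>y\<in>sg (revealed \<sigma>). level_dig sg \<sigma> u y)" by (simp add: level_dig_0)
  then have "level_dig sg \<sigma> u x \<le> round_plan sg \<sigma> u x" unfolding round_plan_def using x by simp
  then show ?thesis using dgx by simp
qed

lemma hit_set_exact_depth:
  assumes I: "run_inv \<sigma> F b" and u0: "0 \<le> u"
    and nb: "\<forall>u'. 0 \<le> u' \<and> u' < u \<longrightarrow> \<not> hits (round_plan sg \<sigma>) (dug \<sigma>) F u'"
    and j: "j \<in> hit_set (round_plan sg \<sigma>) (dug \<sigma>) F u"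
  shows "dp j = dug \<sigma> (pl j) + round_plan sg \<sigma> u (pl j)"
proof (rule first_hit_exact_depth[OF lip_plan_round_plan u0 nb j])
  have "j < d" "j \<notin> F" using j by (auto simp: hit_set_def)
  then have "j \<notin> {j. j < d \<and> dp j < dug \<sigma> (pl j)}" using run_inv_passed_found[OF I] by blast
  then show "dug \<sigma> (pl j) \<le> dp j" using \<open>j < d\<close> by simp
qed

lemma record_find_found:
  assumes I: "run_inv \<sigma> F b" and u0: "0 \<le> u"
    and nb: "\<forall>u'. 0 \<le> u' \<and> u' < u \<longrightarrow> \<not> hits (round_plan sg \<sigma>) (dug \<sigma>) F u'"
  defines "N \<equiv> hit_set (round_plan sg \<sigma>) (dug \<sigma>) F u"
  shows "F \<union> N = {j. j < d \<and> dp j \<le> dug (record_find sg \<sigma> u (place_counts N)) (pl j)}"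
    (is "_ = {j. j < d \<and> dp j \<le> dug ?\<sigma>' (pl j)}")
    and "found_upto (record_find sg \<sigma> u (place_counts N)) x = (\<lambda>v. card {j\<in>found_at (F \<union> N) x. dp j \<le> v})"
proof -
  define \<sigma>' where "\<sigma>' = ?\<sigma>'"
  have dug': "dug \<sigma>' = (\<lambda>x. dug \<sigma> x + round_plan sg \<sigma> u x)" by (simp add: \<sigma>'_def record_find_def)
  have nonneg: "\<And>x. 0 \<le> round_plan sg \<sigma> u x" using lip_plan_nonneg[OF lip_plan_round_plan u0] .
  have "j \<in> {j. j < d \<and> dp j \<le> dug \<sigma> (pl j) + round_plan sg \<sigma> u (pl j)}" if "j \<in> F" for j
    using subsetD[OF run_inv_found_reached[OF I] that] nonneg[of "pl j"] by simp
  then show "F \<union> N = {j. j < d \<and> dp j \<le> dug ?\<sigma>' (pl j)}" unfolding dug'[unfolded \<sigma>'_def] by (auto simp: N_def hit_set_def)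
  show "found_upto ?\<sigma>' x = (\<lambda>v. card {j\<in>found_at (F \<union> N) x. dp j \<le> v})"
    unfolding \<sigma>'_def[symmetric]
  proof
    fix v
    have fin: "finite N" "finite F" using run_inv_finite_found[OF I] by (auto simp: N_def hit_set_def)
    have "{j\<in>found_at (F \<union> N) x. dp j \<le> v} = {j\<in>found_at F x. dp j \<le> v} \<union> {j\<in>N. pl j = x \<and> dp j \<le> v}" by auto
    then have "card {j\<in>found_at (F \<union> N) x. dp j \<le> v} = card {j\<in>found_at F x. dp j \<le> v} + card {j\<in>N. pl j = x \<and> dp j \<le> v}"
      by (simp add: card_Un_disjoint fin N_def hit_set_def disjoint_iff)
    moreover have "{j\<in>N. pl j = x \<and> dp j \<le> v} = (if dug \<sigma>' x \<le> v then {j \<in> N. pl j = x} else {})"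
      using hit_set_exact_depth[OF I u0 nb] unfolding dug' N_def by auto
    ultimately show "found_upto \<sigma>' x v = card {j\<in>found_at (F \<union> N) x. dp j \<le> v}"
      using run_inv_found_upto[OF I, of x] dug' by (simp add: \<sigma>'_def record_find_def)
  qed
qed

lemma record_find_settled:
  assumes I: "run_inv \<sigma> F b" and u0: "0 \<le> u"
    and nb: "\<forall>u'. 0 \<le> u' \<and> u' < u \<longrightarrow> \<not> hits (round_plan sg \<sigma>) (dug \<sigma>) F u'"
    and lev: "length (revealed \<sigma>) < d \<Longrightarrow> \<forall>x\<in>open_doors pl d (revealed \<sigma>) (sg (revealed \<sigma>)).
               (effort \<sigma> + u) / card (sg (revealed \<sigma>)) \<le> depth_gap pl dp d (revealed \<sigma>) x"
  defines "N \<equiv> hit_set (round_plan sg \<sigma>) (dug \<sigma>) F u"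
  shows "settled_inv (record_find sg \<sigma> u (place_counts N)) (F \<union> N) (b - u)"
proof -
  define \<sigma>' where "\<sigma>' = record_find sg \<sigma> u (place_counts N)"
  note found = record_find_found[OF I u0 nb, folded N_def, folded \<sigma>'_def]
  have dug': "dug \<sigma>' = (\<lambda>x. dug \<sigma> x + round_plan sg \<sigma> u x)" by (simp add: \<sigma>'_def record_find_def)
  have revealed': "revealed \<sigma>' = revealed \<sigma>" and effort': "effort \<sigma>' = effort \<sigma> + u"
    by (simp_all add: \<sigma>'_def record_find_def)
  have cnt': "cnt x (revealed \<sigma>') \<le> card (found_at (F \<union> N) x)" for x
  proof -
    have "card (found_at F x) \<le> card (found_at (F \<union> N) x)"
      by (rule card_mono) (use run_inv_finite_found[OF I] in \<open>auto simp: N_def hit_set_def\<close>)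
    then show ?thesis using run_inv_cnt[OF I, of x] revealed' by simp
  qed
  have reached: "F \<union> N \<subseteq> {j. j < d \<and> dp j \<le> dug \<sigma>' (pl j)}" and passed: "{j. j < d \<and> dp j < dug \<sigma>' (pl j)} \<subseteq> F \<union> N"
    unfolding found(1) by auto
  have revealed_depth': "revealed_depth \<sigma>' x = revealed_depth \<sigma> x" for x
  proof -
    have "revealed_depth \<sigma>' x = kth_depth x (cnt x (revealed \<sigma>'))"
      unfolding revealed_depth_def using kth_value_found_eq[OF reached passed cnt'[of x]] found(2)[of x] by simp
    then show ?thesis using run_inv_revealed_depth[OF I, of x] revealed' by simp
  qed
  have "run_inv \<sigma>' (F \<union> N) (b - u)"
  proof (rule run_invI[OF reached passed found(2) cnt'])
    show "set (revealed \<sigma>') \<subseteq> {..<n}" using run_inv_revealed_doors[OF I] revealed' by simp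
    show "m_win (treasure_count pl d) (min_gap_door pl dp d) sg (revealed \<sigma>') (d - length (revealed \<sigma>'))"
      using run_inv_m_win[OF I] revealed' by simp
    show "length (revealed \<sigma>') \<le> d" using run_inv_length_le[OF I] revealed' by simp
    show "0 \<le> effort \<sigma>'" using run_inv_effort_nonneg[OF I] u0 effort' by simp
    show "0 \<le> dug \<sigma>' x" for x
      using run_inv_dug_nonneg[OF I, of x] lip_plan_nonneg[OF lip_plan_round_plan[of \<sigma>] u0, of x] dug' by simp
    show "revealed_depth \<sigma>' x + level sg \<sigma>' \<le> dug \<sigma>' x" if "x \<in> sg (revealed \<sigma>')" for x
      using round_plan_reaches_level[OF I _ u0, of x] that revealed_depth'[of x] dug' revealed' effort' by (simp add: level_def)
    show "level sg \<sigma>' \<le> depth_gap pl dp d (revealed \<sigma>') x"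
      if "length (revealed \<sigma>') < d" "x \<in> open_doors pl d (revealed \<sigma>') (sg (revealed \<sigma>'))" for x
      using lev that revealed' effort' by (simp add: level_def)
    show "real k * remaining_depth (revealed \<sigma>') \<le> b - u + effort \<sigma>'" using run_inv_budget[OF I] revealed' effort' by simp
  qed
  then show ?thesis unfolding settled_inv_def \<sigma>'_def using found(1) \<sigma>'_def by simp
qed

lemma advance_eq_record_find: "advance sg \<sigma> u = record_find sg \<sigma> u (place_counts {})"
  by (simp add: advance_def record_find_def)


lemma found_upto_mono: "run_inv \<sigma> F b \<Longrightarrow> v \<le> v' \<Longrightarrow> found_upto \<sigma> x v \<le> found_upto \<sigma> x v'"
  using run_inv_found_upto[of \<sigma> F b x] run_inv_finite_found[of \<sigma> F b]
  by simp (rule card_mono, auto)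

definition min_gap :: "sim_state \<Rightarrow> real" where
  "min_gap \<sigma> = Min (depth_gap pl dp d (revealed \<sigma>) ` open_doors pl d (revealed \<sigma>) (sg (revealed \<sigma>)))"

definition round_effort :: "sim_state \<Rightarrow> real" where
  "round_effort \<sigma> = card (sg (revealed \<sigma>)) * min_gap \<sigma> - effort \<sigma>"

lemma min_gap_props:
  assumes I: "run_inv \<sigma> F b" and lenlt: "length (revealed \<sigma>) < d"
  defines "A \<equiv> open_doors pl d (revealed \<sigma>) (sg (revealed \<sigma>))"
  shows "\<exists>x0\<in>A. depth_gap pl dp d (revealed \<sigma>) x0 = min_gap \<sigma>"
    and "\<And>x. x \<in> A \<Longrightarrow> min_gap \<sigma> \<le> depth_gap pl dp d (revealed \<sigma>) x"
    and "0 < card (sg (revealed \<sigma>))" and "level sg \<sigma> \<le> min_gap \<sigma>" and "0 \<le> min_gap \<sigma>"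
    and "(effort \<sigma> + round_effort \<sigma>) / card (sg (revealed \<sigma>)) = min_gap \<sigma>"
proof -
  let ?gp = "depth_gap pl dp d (revealed \<sigma>)"
  have Ane: "A \<noteq> {}" using run_inv_open_nonempty[OF I lenlt] unfolding A_def .
  have Afin: "finite A" unfolding A_def by (rule finite_open_doors)
  have "Min (?gp ` A) \<in> ?gp ` A" using Afin Ane by (intro Min_in) auto
  then show x0: "\<exists>x0\<in>A. ?gp x0 = min_gap \<sigma>" unfolding min_gap_def A_def by force
  show le: "\<And>x. x \<in> A \<Longrightarrow> min_gap \<sigma> \<le> ?gp x" using Afin unfolding min_gap_def A_def by auto
  have "A \<subseteq> sg (revealed \<sigma>)" unfolding A_def open_doors_def by auto
  then show spos: "0 < card (sg (revealed \<sigma>))" using Ane finite_selected by (metis card_gt_0_iff subset_empty)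
  show "level sg \<sigma> \<le> min_gap \<sigma>"
    unfolding min_gap_def using Afin Ane run_inv_level_le_gap[OF I lenlt] unfolding A_def by (intro Min.boundedI) auto
  show "0 \<le> min_gap \<sigma>" using x0 depth_gap_nonneg unfolding A_def open_doors_def by force
  show "(effort \<sigma> + round_effort \<sigma>) / card (sg (revealed \<sigma>)) = min_gap \<sigma>"
    using spos unfolding round_effort_def by simp
qed

lemma round_effort_props:
  assumes I: "run_inv \<sigma> F b" and lenlt: "length (revealed \<sigma>) < d"
  shows "0 \<le> round_effort \<sigma>" and "round_effort \<sigma> \<le> b"
    and "\<And>u x. u \<le> round_effort \<sigma> \<Longrightarrow> x \<in> open_doors pl d (revealed \<sigma>) (sg (revealed \<sigma>)) \<Longrightarrow>
           (effort \<sigma> + u) / card (sg (revealed \<sigma>)) \<le> depth_gap pl dp d (revealed \<sigma>) x"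
    and "pending sg \<sigma> \<noteq> {} \<Longrightarrow> round_effort \<sigma> \<le> ready_effort sg \<sigma>"
proof -
  let ?h = "revealed \<sigma>" and ?s = "card (sg (revealed \<sigma>))" and ?L = "min_gap \<sigma>"
  note mg = min_gap_props[OF I lenlt]
  show "0 \<le> round_effort \<sigma>" using mg(3,4) unfolding round_effort_def level_def by (simp add: divide_le_eq mult.commute)
  obtain x0 where x0: "x0 \<in> open_doors pl d ?h (sg ?h)" "depth_gap pl dp d ?h x0 = ?L" using mg(1) by blast
  have "?L \<le> remaining_depth ?h"
    using depth_gap_le_remaining[of ?h x0] run_inv_cnt_le[OF I] x0 selected_sub by (auto simp: open_doors_def)
  then have "?s * ?L \<le> real k * remaining_depth ?h"
    using card_selected_le[of ?h] mg(5) by (meson mult_mono of_nat_0_le_iff of_nat_le_iff order_trans)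
  then show "round_effort \<sigma> \<le> b" using run_inv_budget[OF I] unfolding round_effort_def by simp
  show "(effort \<sigma> + u) / ?s \<le> depth_gap pl dp d ?h x"
    if "u \<le> round_effort \<sigma>" "x \<in> open_doors pl d ?h (sg ?h)" for u x
  proof -
    have "(effort \<sigma> + u) / ?s \<le> (effort \<sigma> + round_effort \<sigma>) / ?s" using that(1) by (simp add: divide_right_mono)
    then show ?thesis using mg(6) mg(2)[OF that(2)] by simp
  qed
  assume pne: "pending sg \<sigma> \<noteq> {}"
  have pfin: "finite (pending sg \<sigma>)" unfolding pending_def using finite_selected by simp
  have "?L \<le> Min (known_gap \<sigma> ` pending sg \<sigma>)"
    using pfin pne run_inv_known_gap[OF I] run_inv_pending_sub_open[OF I] mg(2) by (intro Min.boundedI) auto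
  then have "?s * ?L \<le> ?s * Min (known_gap \<sigma> ` pending sg \<sigma>)" by (simp add: mult_left_mono)
  then show "round_effort \<sigma> \<le> ready_effort sg \<sigma>" unfolding ready_effort_def round_effort_def by simp
qed

lemma round_effort_end:
  assumes I: "run_inv \<sigma> F b" and lenlt: "length (revealed \<sigma>) < d"
  shows "hits (round_plan sg \<sigma>) (dug \<sigma>) F (round_effort \<sigma>) \<or>
    (pending sg \<sigma> \<noteq> {} \<and> ready_effort sg \<sigma> = round_effort \<sigma> \<and> ready sg (advance sg \<sigma> (round_effort \<sigma>)) \<noteq> {})"
proof -
  let ?h = "revealed \<sigma>" and ?ue = "round_effort \<sigma>"
  note mg = min_gap_props[OF I lenlt]
  have ue0: "0 \<le> ?ue" by (rule round_effort_props(1)[OF I lenlt])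
  obtain x0 where x0A: "x0 \<in> open_doors pl d ?h (sg ?h)" and gx0: "depth_gap pl dp d ?h x0 = min_gap \<sigma>"
    using mg(1) by blast
  have x0S: "x0 \<in> sg ?h" and x0c: "cnt x0 ?h < treasure_count pl d x0" using x0A by (auto simp: open_doors_def)
  show ?thesis
  proof (cases "x0 \<in> pending sg \<sigma>")
    case False
    define m0 where "m0 = card (found_at F x0)"
    have "{j\<in>found_at F x0. dp j \<le> dug \<sigma> x0} = found_at F x0" using run_inv_found_reached[OF I] by auto
    then have cm: "cnt x0 ?h = m0" using False run_inv_pending_iff[OF I] x0S run_inv_cnt[OF I, of x0] unfolding m0_def by auto
    let ?t = "kth_depth x0 (Suc m0)"
    have "Suc m0 \<le> card {j\<in>at_place x0. dp j \<le> ?t}" using kth_depth_le_iff[of "Suc m0" x0 ?t] x0c cm by simp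
    then have "\<not> {j\<in>at_place x0. dp j \<le> ?t} \<subseteq> found_at F x0"
      using card_mono[of "found_at F x0" "{j\<in>at_place x0. dp j \<le> ?t}"] run_inv_finite_found[OF I] unfolding m0_def by auto
    then obtain j0 where j0: "j0 < d" "pl j0 = x0" "dp j0 \<le> ?t" "j0 \<notin> F" by auto
    have "?t = revealed_depth \<sigma> x0 + (effort \<sigma> + ?ue) / card (sg ?h)"
      using run_inv_revealed_depth[OF I, of x0] gx0 cm mg(6) unfolding depth_gap_eq by simp
    also have "\<dots> \<le> dug \<sigma> x0 + round_plan sg \<sigma> ?ue x0" using round_plan_reaches_level[OF I x0S ue0] .
    finally show ?thesis using j0 unfolding hits_def by auto
  next
    case True
    have pfin: "finite (pending sg \<sigma>)" unfolding pending_def using finite_selected by simp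
    have "Min (known_gap \<sigma> ` pending sg \<sigma>) \<le> min_gap \<sigma>" using pfin True run_inv_known_gap[OF I True] gx0 by (metis Min_le finite_imageI image_eqI)
    then have "ready_effort sg \<sigma> \<le> ?ue" using mg(3) ue0 unfolding ready_effort_def round_effort_def by (simp add: mult_left_mono)
    then have uoe: "ready_effort sg \<sigma> = ?ue" using round_effort_props(4)[OF I lenlt] True by fastforce
    have "cnt x0 ?h < found_upto \<sigma> x0 (dug \<sigma> x0)" using True unfolding pending_def by simp
    also have "\<dots> \<le> found_upto \<sigma> x0 (dug \<sigma> x0 + round_plan sg \<sigma> ?ue x0)"
      using found_upto_mono[OF I] lip_plan_nonneg[OF lip_plan_round_plan ue0] by simp
    finally have "x0 \<in> pending sg (advance sg \<sigma> ?ue)" using x0S unfolding pending_def advance_def by simp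
    moreover have "known_gap (advance sg \<sigma> ?ue) x0 = min_gap \<sigma>"
      using run_inv_known_gap[OF I True] gx0 by (simp add: known_gap_def advance_def)
    moreover have "level sg (advance sg \<sigma> ?ue) = min_gap \<sigma>" using mg(6) unfolding level_def advance_def by simp
    ultimately have "x0 \<in> ready sg (advance sg \<sigma> ?ue)" unfolding ready_def by simp
    then show ?thesis using True uoe by auto
  qed
qed

lemma event_within_round:
  assumes I: "run_inv \<sigma> F b" and first: "first_hit P (dug \<sigma>) F u"
    and agree: "\<And>v. 0 \<le> v \<Longrightarrow> v \<le> u \<Longrightarrow> P v = round_plan sg \<sigma> v"
    and lev: "\<forall>x\<in>open_doors pl d (revealed \<sigma>) (sg (revealed \<sigma>)). (effort \<sigma> + u) / card (sg (revealed \<sigma>)) \<le> depth_gap pl dp d (revealed \<sigma>) x"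
  defines "N \<equiv> hit_set P (dug \<sigma>) F u"
  defines "\<sigma>' \<equiv> reveal_ready sg d (record_find sg \<sigma> u (place_counts N))"
  shows "run_inv \<sigma>' (F \<union> N) (b - u) \<and> dug \<sigma>' = (\<lambda>i. dug \<sigma> i + P u i)"
proof -
  have u0: "0 \<le> u" using first unfolding first_hit_def by blast
  have nb: "\<forall>u'. 0 \<le> u' \<and> u' < u \<longrightarrow> \<not> hits (round_plan sg \<sigma>) (dug \<sigma>) F u'"
    using first agree unfolding first_hit_def hits_def by force
  have "N = hit_set (round_plan sg \<sigma>) (dug \<sigma>) F u" unfolding N_def hit_set_def using agree[OF u0 order.refl] by simp
  then have "settled_inv (record_find sg \<sigma> u (place_counts N)) (F \<union> N) (b - u)"
    using record_find_settled[OF I u0 nb] lev by simp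
  note R = reveal_ready_props[OF this le_add1]
  then have "run_inv \<sigma>' (F \<union> N) (b - u)" unfolding \<sigma>'_def settled_inv_def by blast
  moreover have "dug \<sigma>' = (\<lambda>i. dug \<sigma> i + P u i)"
    using R agree[OF u0 order.refl] unfolding \<sigma>'_def by (simp add: record_find_def)
  ultimately show ?thesis ..
qed

lemma plan_Suc_in_round:
  assumes I: "run_inv \<sigma> F b" and lenlt: "length (revealed \<sigma>) < d" and w: "w \<le> round_effort \<sigma>"
  shows "plan sg d (Suc f) \<sigma> w = round_plan sg \<sigma> w"
    and "update sg d (Suc f) \<sigma> (w, cs) = reveal_ready sg d (record_find sg \<sigma> w cs)"
proof -
  have "pending sg \<sigma> = {} \<or> w \<le> ready_effort sg \<sigma>"
    using round_effort_props(4)[OF I lenlt] w by (cases "pending sg \<sigma> = {}") auto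
  then show "plan sg d (Suc f) \<sigma> w = round_plan sg \<sigma> w"
    and "update sg d (Suc f) \<sigma> (w, cs) = reveal_ready sg d (record_find sg \<sigma> w cs)"
    by (auto simp: fun_eq_iff)
qed

lemma update_Suc_within_round:
  assumes I: "run_inv \<sigma> F b" and lenlt: "length (revealed \<sigma>) < d"
    and first: "first_hit (plan sg d (Suc f) \<sigma>) (dug \<sigma>) F u"
    and v: "0 \<le> v" "v \<le> round_effort \<sigma>" "hits (round_plan sg \<sigma>) (dug \<sigma>) F v"
  defines "N \<equiv> hit_set (plan sg d (Suc f) \<sigma>) (dug \<sigma>) F u"
  shows "run_inv (update sg d (Suc f) \<sigma> (u, place_counts N)) (F \<union> N) (b - u) \<and>
    dug (update sg d (Suc f) \<sigma> (u, place_counts N)) = (\<lambda>i. dug \<sigma> i + plan sg d (Suc f) \<sigma> u i)"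
proof -
  note agree = plan_Suc_in_round(1)[OF I lenlt]
  have "hits (plan sg d (Suc f) \<sigma>) (dug \<sigma>) F v" using v(3) agree[OF v(2)] by (simp add: hits_def del: plan.simps)
  then have "u \<le> v" using first v(1) unfolding first_hit_def by (meson not_le)
  then have u_ue: "u \<le> round_effort \<sigma>" using v(2) by simp
  have "\<forall>x\<in>open_doors pl d (revealed \<sigma>) (sg (revealed \<sigma>)). (effort \<sigma> + u) / card (sg (revealed \<sigma>)) \<le> depth_gap pl dp d (revealed \<sigma>) x"
    using round_effort_props(3)[OF I lenlt] u_ue by blast
  moreover have "\<And>w. 0 \<le> w \<Longrightarrow> w \<le> u \<Longrightarrow> plan sg d (Suc f) \<sigma> w = round_plan sg \<sigma> w" using agree u_ue by simp
  ultimately show ?thesis using event_within_round[OF I first] unfolding N_def plan_Suc_in_round(2)[OF I lenlt u_ue] by blast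
qed

text \<open>If nothing is hit during a round, the round ends by revealing a door; the plan then
  continues with the plan of the next round, which needs one simulated reveal fewer.\<close>
lemma round_handover:
  assumes I: "run_inv \<sigma> F b" and lenlt: "length (revealed \<sigma>) < d" and fu: "d \<le> Suc f + length (revealed \<sigma>)"
    and nh: "\<And>v. 0 \<le> v \<Longrightarrow> v \<le> round_effort \<sigma> \<Longrightarrow> \<not> hits (round_plan sg \<sigma>) (dug \<sigma>) F v"
  defines "ue \<equiv> round_effort \<sigma>"
  defines "\<sigma>' \<equiv> reveal_ready sg d (advance sg \<sigma> ue)"
  shows "pending sg \<sigma> \<noteq> {}" and "ready_effort sg \<sigma> = ue" and "run_inv \<sigma>' F (b - ue)"
    and "d \<le> f + length (revealed \<sigma>')"
    and "\<forall>v x. 0 \<le> v \<longrightarrow> dug \<sigma>' x + plan sg d f \<sigma>' v x = dug \<sigma> x + plan sg d (Suc f) \<sigma> (ue + v) x"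
proof -
  have ue0: "0 \<le> ue" unfolding ue_def by (rule round_effort_props(1)[OF I lenlt])
  have alt: "pending sg \<sigma> \<noteq> {} \<and> ready_effort sg \<sigma> = ue \<and> ready sg (advance sg \<sigma> ue) \<noteq> {}"
    using round_effort_end[OF I lenlt] nh[OF ue0[unfolded ue_def] order.refl] unfolding ue_def by blast
  then show pne: "pending sg \<sigma> \<noteq> {}" and uoe: "ready_effort sg \<sigma> = ue" by simp_all
  have nb: "\<forall>u'. 0 \<le> u' \<and> u' < ue \<longrightarrow> \<not> hits (round_plan sg \<sigma>) (dug \<sigma>) F u'" using nh unfolding ue_def by auto
  have N0: "hit_set (round_plan sg \<sigma>) (dug \<sigma>) F ue = {}"
    using nh[OF ue0[unfolded ue_def] order.refl] unfolding ue_def hits_def hit_set_def by auto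
  have "settled_inv (record_find sg \<sigma> ue (place_counts (hit_set (round_plan sg \<sigma>) (dug \<sigma>) F ue)))
      (F \<union> hit_set (round_plan sg \<sigma>) (dug \<sigma>) F ue) (b - ue)"
    by (rule record_find_settled[OF I ue0 nb]) (use round_effort_props(3)[OF I lenlt] in \<open>auto simp: ue_def\<close>)
  then have "settled_inv (advance sg \<sigma> ue) F (b - ue)" unfolding N0 advance_eq_record_find by simp
  note R = reveal_ready_props[OF this le_add1]
  then show "run_inv \<sigma>' F (b - ue)" unfolding \<sigma>'_def settled_inv_def by blast
  have "length (revealed \<sigma>) < length (revealed \<sigma>')" using R alt unfolding \<sigma>'_def by (simp add: advance_def)
  then show "d \<le> f + length (revealed \<sigma>')" using fu by simp
  have dug': "dug \<sigma>' = (\<lambda>x. dug \<sigma> x + round_plan sg \<sigma> ue x)" using R unfolding \<sigma>'_def by (simp add: advance_def)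
  show "\<forall>v x. 0 \<le> v \<longrightarrow> dug \<sigma>' x + plan sg d f \<sigma>' v x = dug \<sigma> x + plan sg d (Suc f) \<sigma> (ue + v) x"
  proof (intro allI impI)
    fix v :: real and x :: nat assume v0: "0 \<le> v"
    show "dug \<sigma>' x + plan sg d f \<sigma>' v x = dug \<sigma> x + plan sg d (Suc f) \<sigma> (ue + v) x"
    proof (cases "v = 0")
      case True
      then show ?thesis using lip_plan_0[OF lip_plan_plan] dug' uoe by simp
    next
      case False
      then have "\<not> (pending sg \<sigma> = {} \<or> ue + v \<le> ready_effort sg \<sigma>)" using pne uoe v0 by simp
      then show ?thesis using dug' uoe unfolding \<sigma>'_def by simp
    qed
  qed
qed

lemma plan_hits:
  assumes "run_inv \<sigma> F b" "\<not> {..<d} \<subseteq> F" "d \<le> f + length (revealed \<sigma>)"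
  shows "\<exists>u. 0 \<le> u \<and> u \<le> b \<and> hits (plan sg d f \<sigma>) (dug \<sigma>) F u"
  using assms
proof (induction f arbitrary: \<sigma> b)
  case 0
  then show ?case using run_inv_length_lt_d by fastforce
next
  case (Suc f)
  note I = Suc.prems(1) and nall = Suc.prems(2) and fu = Suc.prems(3)
  have lenlt: "length (revealed \<sigma>) < d" by (rule run_inv_length_lt_d[OF I nall])
  define ue where "ue = round_effort \<sigma>"
  show ?case
  proof (cases "\<exists>v. 0 \<le> v \<and> v \<le> ue \<and> hits (round_plan sg \<sigma>) (dug \<sigma>) F v")
    case True
    then obtain v where v: "0 \<le> v" "v \<le> ue" "hits (round_plan sg \<sigma>) (dug \<sigma>) F v" by blast
    have "plan sg d (Suc f) \<sigma> v = round_plan sg \<sigma> v" using plan_Suc_in_round(1)[OF I lenlt] v(2) unfolding ue_def by blast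
    then have "hits (plan sg d (Suc f) \<sigma>) (dug \<sigma>) F v" using v(3) by (simp add: hits_def del: plan.simps)
    moreover have "v \<le> b" using v(2) round_effort_props(2)[OF I lenlt] unfolding ue_def by linarith
    ultimately show ?thesis using v(1) by blast
  next
    case False
    note H = round_handover[OF I lenlt fu, folded ue_def]
    obtain w where w: "0 \<le> w" "w \<le> b - ue" "hits (plan sg d f (reveal_ready sg d (advance sg \<sigma> ue))) (dug (reveal_ready sg d (advance sg \<sigma> ue))) F w"
      using Suc.IH[OF H(3) nall H(4)] False unfolding ue_def by blast
    have "hits (plan sg d (Suc f) \<sigma>) (dug \<sigma>) F (ue + w)" using hits_shift[OF H(5) w(1)] w(3) False unfolding ue_def by blast
    moreover have "0 \<le> ue" unfolding ue_def by (rule round_effort_props(1)[OF I lenlt])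
    moreover have "ue + w \<le> b" using w(2) by simp
    ultimately show ?thesis using w(1) by (meson add_nonneg_nonneg)
  qed
qed

lemma update_run_inv:
  assumes "run_inv \<sigma> F b" "\<not> {..<d} \<subseteq> F" "d \<le> f + length (revealed \<sigma>)"
    and "first_hit (plan sg d f \<sigma>) (dug \<sigma>) F u" "u \<le> b"
  defines "N \<equiv> hit_set (plan sg d f \<sigma>) (dug \<sigma>) F u"
  shows "run_inv (update sg d f \<sigma> (u, place_counts N)) (F \<union> N) (b - u) \<and>
    dug (update sg d f \<sigma> (u, place_counts N)) = (\<lambda>i. dug \<sigma> i + plan sg d f \<sigma> u i)"
  using assms(1-5) unfolding N_def
proof (induction f arbitrary: \<sigma> b u)
  case 0
  then show ?case using run_inv_length_lt_d by fastforce
next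
  case (Suc f)
  note I = Suc.prems(1) and nall = Suc.prems(2) and fu = Suc.prems(3) and first = Suc.prems(4)
  let ?P = "plan sg d (Suc f) \<sigma>"
  have lenlt: "length (revealed \<sigma>) < d" by (rule run_inv_length_lt_d[OF I nall])
  define ue where "ue = round_effort \<sigma>"
  have ue0: "0 \<le> ue" unfolding ue_def by (rule round_effort_props(1)[OF I lenlt])
  have u0: "0 \<le> u" using first unfolding first_hit_def by blast
  show ?case
  proof (cases "\<exists>v. 0 \<le> v \<and> v \<le> ue \<and> hits (round_plan sg \<sigma>) (dug \<sigma>) F v")
    case True
    then show ?thesis using update_Suc_within_round[OF I lenlt first] unfolding ue_def by blast
  next
    case False
    have nh_round: "\<And>v. 0 \<le> v \<Longrightarrow> v \<le> round_effort \<sigma> \<Longrightarrow> \<not> hits (round_plan sg \<sigma>) (dug \<sigma>) F v"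
      using False unfolding ue_def by blast
    note H = round_handover[OF I lenlt fu nh_round, folded ue_def]
    define \<sigma>' where "\<sigma>' = reveal_ready sg d (advance sg \<sigma> ue)"
    have nh: "\<not> hits ?P (dug \<sigma>) F v" if "0 \<le> v" "v \<le> ue" for v
    proof -
      have "?P v = round_plan sg \<sigma> v" using plan_Suc_in_round(1)[OF I lenlt] that unfolding ue_def by blast
      then show ?thesis using nh_round[of v] that unfolding ue_def by (simp add: hits_def del: plan.simps)
    qed
    have "hits ?P (dug \<sigma>) F u" using first unfolding first_hit_def by blast
    then have uou: "ue < u" using nh u0 by force
    have sh: "\<forall>v x. 0 \<le> v \<longrightarrow> dug \<sigma>' x + plan sg d f \<sigma>' v x = dug \<sigma> x + ?P (ue + v) x"
      using H(5) unfolding \<sigma>'_def by blast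
    have first': "first_hit (plan sg d f \<sigma>') (dug \<sigma>') F (u - ue)" by (rule first_hit_shift[OF sh ue0 first uou])
    have Neq: "hit_set (plan sg d f \<sigma>') (dug \<sigma>') F (u - ue) = hit_set ?P (dug \<sigma>) F u"
      using hit_set_shift[OF sh, of "u - ue" F] uou by (simp del: plan.simps)
    have IH: "run_inv (update sg d f \<sigma>' (u - ue, place_counts (hit_set ?P (dug \<sigma>) F u))) (F \<union> hit_set ?P (dug \<sigma>) F u) (b - u) \<and>
      dug (update sg d f \<sigma>' (u - ue, place_counts (hit_set ?P (dug \<sigma>) F u))) = (\<lambda>i. dug \<sigma>' i + plan sg d f \<sigma>' (u - ue) i)"
      using Suc.IH[OF H(3)[folded \<sigma>'_def] nall H(4)[folded \<sigma>'_def] first'] Suc.prems(5) unfolding Neq by (simp del: plan.simps)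
    have "update sg d (Suc f) \<sigma> (u, place_counts (hit_set ?P (dug \<sigma>) F u))
        = update sg d f \<sigma>' (u - ue, place_counts (hit_set ?P (dug \<sigma>) F u))"
      using H(1,2) uou False unfolding \<sigma>'_def by simp
    moreover have "(\<lambda>i. dug \<sigma>' i + plan sg d f \<sigma>' (u - ue) i) = (\<lambda>i. dug \<sigma> i + ?P u i)"
    proof
      fix i
      have "dug \<sigma>' i + plan sg d f \<sigma>' (u - ue) i = dug \<sigma> i + ?P (ue + (u - ue)) i"
        using sh uou by simp
      then show "dug \<sigma>' i + plan sg d f \<sigma>' (u - ue) i = dug \<sigma> i + ?P u i" by (simp del: plan.simps)
    qed
    ultimately show ?thesis using IH by (simp del: plan.simps)
  qed
qed

lemma caching_strategy_wins_from:
  assumes "run_inv (state_of sg d hs) F b" "card ({..<d} - F) \<le> r"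
  shows "a_win d (caching_strategy sg d) pl dp b (dug (state_of sg d hs)) F hs r"
  using assms
proof (induction r arbitrary: hs F b)
  case 0
  have "{..<d} - F = {}" using 0(2) by simp
  then show ?case by auto
next
  case (Suc r)
  note I = Suc.prems(1)
  show ?case
  proof (cases "{..<d} \<subseteq> F")
    case True then show ?thesis by simp
  next
    case nall: False
    define \<sigma> where "\<sigma> = state_of sg d hs"
    define P where "P = caching_strategy sg d hs"
    define cur where "cur = dug \<sigma>"
    have Pp: "P = plan sg d d \<sigma>" unfolding P_def caching_strategy_def \<sigma>_def ..
    have I': "run_inv \<sigma> F b" using I \<sigma>_def by simp
    have fu: "d \<le> d + length (revealed \<sigma>)" by simp
    have LPP: "lip_plan P" unfolding Pp by (rule lip_plan_plan)
    obtain u0 where u0: "0 \<le> u0" "u0 \<le> b" "hits P cur F u0" using plan_hits[OF I' nall fu] unfolding Pp cur_def by blast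
    define R where "R = (\<lambda>j. {u. 0 \<le> u \<and> u \<le> b \<and> dp j \<le> cur (pl j) + P u (pl j)})"
    define U where "U = {j. j < d \<and> j \<notin> F \<and> R j \<noteq> {}}"
    define t where "t = (\<lambda>j. Inf (R j))"
    define us where "us = Min (t ` U)"
    define N where "N = {j \<in> U. t j = us}"
    have G: "U \<noteq> {} \<and> first_hit P cur F us \<and> us \<le> b \<and> N = hit_set P cur F us \<and> N \<noteq> {}"
      using first_hit_exists[OF LPP u0] unfolding R_def U_def t_def us_def N_def by blast
    have E2: "run_inv (update sg d d \<sigma> (us, place_counts N)) (F \<union> N) (b - us) \<and>
      dug (update sg d d \<sigma> (us, place_counts N)) = (\<lambda>i. cur i + P us i)"
      using update_run_inv[OF I' nall fu] G unfolding Pp cur_def by blast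
    have state': "state_of sg d (hs @ [(us, place_counts N)]) = update sg d d \<sigma> (us, place_counts N)"
      unfolding \<sigma>_def by (rule state_of_snoc)
    have NF: "N \<subseteq> {..<d} - F" using G by (auto simp: hit_set_def)
    have "card ({..<d} - (F \<union> N)) < card ({..<d} - F)"
    proof (rule psubset_card_mono)
      show "{..<d} - (F \<union> N) \<subset> {..<d} - F" using NF G by blast
    qed simp
    then have cr: "card ({..<d} - (F \<union> N)) \<le> r" using Suc.prems(2) by simp
    have IH: "a_win d (caching_strategy sg d) pl dp (b - us) (\<lambda>i. cur i + P us i) (F \<union> N) (hs @ [(us, place_counts N)]) r"
      using Suc.IH[of "hs @ [(us, place_counts N)]" "F \<union> N" "b - us"] state' E2 cr by simp
    show ?thesis
      using G IH unfolding a_win.simps Let_def R_def U_def t_def us_def N_def P_def cur_def \<sigma>_def by simp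
  qed
qed

lemma run_inv_init_state:
  assumes "m_win (treasure_count pl d) (min_gap_door pl dp d) sg [] d"
  shows "run_inv init_state {} (real k)"
proof (rule run_invI)
  show "{j. j < d \<and> dp j < dug init_state (pl j)} \<subseteq> {}" using depth_nonneg by (force simp: init_state_def)
  show "m_win (treasure_count pl d) (min_gap_door pl dp d) sg (revealed init_state) (d - length (revealed init_state))"
    using assms by (simp add: init_state_def)
  show "level sg init_state \<le> depth_gap pl dp d (revealed init_state) x"
    if "x \<in> open_doors pl d (revealed init_state) (sg (revealed init_state))" for x
    using depth_gap_nonneg[of x "revealed init_state"] that by (simp add: init_state_def level_def open_doors_def)
  have "real k * remaining_depth [] \<le> real k" using mult_left_mono[OF remaining_depth_Nil, of "real k"] by simp
  then show "real k * remaining_depth (revealed init_state) \<le> real k + effort init_state" by (simp add: init_state_def)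
qed (simp_all add: init_state_def cnt_Nil revealed_depth_def kth_value_def level_def)

lemma caching_strategy_wins:
  assumes "m_win (treasure_count pl d) (min_gap_door pl dp d) sg [] d"
  shows "a_win d (caching_strategy sg d) pl dp (real k) (\<lambda>_. 0) {} [] d"
proof -
  have "a_win d (caching_strategy sg d) pl dp (real k) (dug (state_of sg d [])) {} [] d"
    by (rule caching_strategy_wins_from) (use run_inv_init_state[OF assms] in \<open>auto simp: state_of_def\<close>)
  then show ?thesis by (simp add: state_of_def init_state_def)
qed

end

section \<open>Comparison of the values\<close>

lemma caching_strategy_wins_against:
  assumes "0 < n" "sg \<in> M_searcher n k" "(hl, pl, dp) \<in> A_hider n d"
    and "m_win (treasure_count pl d) (min_gap_door pl dp d) sg [] d"
  shows "a_win d (caching_strategy sg d) pl dp (real k) (\<lambda>_. 0) {} [] d"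
proof -
  interpret caching_run n d k sg hl pl dp using assms(1-3) by unfold_locales
  show ?thesis using caching_strategy_wins[OF assms(4)] .
qed

lemma bdd_below_prob: "bdd_below ((\<lambda>x. measure_pmf.prob p (X x)) ` A)"
  by (rule bdd_belowI2[where m=0]) simp

lemma A_hider_nonempty: "0 < n \<Longrightarrow> ((\<lambda>_. 0), (\<lambda>_. 0), (\<lambda>_. 0)) \<in> A_hider n d"
  by (simp add: A_hider_def)

lemma INF_M_hider_le_INF_A_hider:
  assumes n: "0 < n" and p: "set_pmf p \<subseteq> M_searcher n k"
  shows "(INF H \<in> M_hider n d. measure_pmf.prob p {sg. m_win (fst H) (snd H) sg [] d})
    \<le> (INF H \<in> A_hider n d. measure_pmf.prob (map_pmf (\<lambda>sg. caching_strategy sg d) p)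
         {sg. a_win d sg (fst (snd H)) (snd (snd H)) (real k) (\<lambda>_. 0) {} [] d})"
proof (rule cINF_greatest)
  show "A_hider n d \<noteq> {}" using A_hider_nonempty[OF n] by blast
  fix H assume H: "H \<in> A_hider n d"
  obtain hl pl dp where Hd: "H = (hl, pl, dp)" by (metis prod.exhaust)
  let ?W = "{sg. m_win (treasure_count pl d) (min_gap_door pl dp d) sg [] d}"
  have HM: "(treasure_count pl d, min_gap_door pl dp d) \<in> M_hider n d" using min_gap_hider_in_M_hider H Hd by simp
  have "(INF H \<in> M_hider n d. measure_pmf.prob p {sg. m_win (fst H) (snd H) sg [] d}) \<le> measure_pmf.prob p ?W"
    using cINF_lower[OF _ HM, of "\<lambda>H. measure_pmf.prob p {sg. m_win (fst H) (snd H) sg [] d}"] by (simp add: bdd_below_prob)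
  also have "\<dots> = measure_pmf.prob p (?W \<inter> set_pmf p)" by (simp add: measure_Int_set_pmf)
  also have "\<dots> \<le> measure_pmf.prob p {sg. a_win d (caching_strategy sg d) pl dp (real k) (\<lambda>_. 0) {} [] d}"
    using caching_strategy_wins_against[OF n _ H[unfolded Hd]] p by (intro measure_pmf.finite_measure_mono) auto
  finally show "(INF H \<in> M_hider n d. measure_pmf.prob p {sg. m_win (fst H) (snd H) sg [] d})
      \<le> measure_pmf.prob (map_pmf (\<lambda>sg. caching_strategy sg d) p)
          {sg. a_win d sg (fst (snd H)) (snd (snd H)) (real k) (\<lambda>_. 0) {} [] d}"
    by (simp add: Hd)
qed

lemma bdd_above_A_values:
  assumes "0 < n"
  shows "bdd_above ((\<lambda>p. INF H \<in> A_hider n d. measure_pmf.prob p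
      {sg. a_win d sg (fst (snd H)) (snd (snd H)) (real k) (\<lambda>_. 0) {} [] d}) ` {p. set_pmf p \<subseteq> A_searcher n})"
proof (rule bdd_aboveI2)
  fix p :: "a_strat pmf"
  have "(INF H \<in> A_hider n d. measure_pmf.prob p {sg. a_win d sg (fst (snd H)) (snd (snd H)) (real k) (\<lambda>_. 0) {} [] d})
      \<le> measure_pmf.prob p {sg. a_win d sg (\<lambda>_. 0) (\<lambda>_. 0) (real k) (\<lambda>_. 0) {} [] d}"
    using cINF_lower[OF _ A_hider_nonempty[OF assms],
        of "\<lambda>H. measure_pmf.prob p {sg. a_win d sg (fst (snd H)) (snd (snd H)) (real k) (\<lambda>_. 0) {} [] d}"]
    by (simp add: bdd_below_prob)
  also have "\<dots> \<le> 1" by simp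
  finally show "(INF H \<in> A_hider n d. measure_pmf.prob p {sg. a_win d sg (fst (snd H)) (snd (snd H)) (real k) (\<lambda>_. 0) {} [] d}) \<le> 1" .
qed

theorem mainTheorem3:
  fixes n d k :: nat
  assumes "0 < n" and "0 < d" and "0 < k"
  shows "v_M n d k \<le> v_A n d k"
  unfolding v_M_def
proof (rule cSUP_least)
  show "{p. set_pmf p \<subseteq> M_searcher n k} \<noteq> {}"
    by (auto simp: M_searcher_def intro!: exI[of _ "return_pmf (\<lambda>h. {})"])
  fix p assume p: "p \<in> {p. set_pmf p \<subseteq> M_searcher n k}"
  let ?q = "map_pmf (\<lambda>sg. caching_strategy sg d) p"
  have "?q \<in> {p. set_pmf p \<subseteq> A_searcher n}"
    using p caching_strategy_in_A_searcher[OF _ assms(1)] by (auto simp: M_searcher_def)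
  then show "(INF H \<in> M_hider n d. measure_pmf.prob p {sg. m_win (fst H) (snd H) sg [] d}) \<le> v_A n d k"
    unfolding v_A_def using INF_M_hider_le_INF_A_hider[OF assms(1)] p
    by (blast intro: order_trans cSUP_upper[OF _ bdd_above_A_values[OF assms(1)]])
qed

end
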